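(* Let $f\in L^2(\pi)$ with $\mathbb{E}_\pi[f]=0$ and $\|f\|_\pi>0$. Then $\lambda\mapsto\mathcal{E}_\lambda(f)=\langle f,(I-P_\lambda)f\rangle_\pi$, $\lambda\ge1$, is a non-negative, continuous, concave and strictly increasing function.
   Context: Let $\pi,q$ be probability densities with respect to a $\sigma$-finite measure $\mu$ on $(\mathbb{X},\mathcal{X})$ with $q>0$ wherever $\pi>0$; $\pi(dx)=\pi(x)\mu(dx)$, $q(dx)=q(x)\mu(dx)$, $\mathbb{S}=\{\pi>0\}$, $w=\pi/q$ on $\mathbb{S}$ and $0$ elsewhere. For integer $N\ge1$ and $z_1\in\mathbb{S}$, $P_N(z_1,A)=\int_{\mathbb{X}^{N-1}}\sum_{i=1}^N\frac{w(z_i)}{\sum_{j=1}^Nw(z_j)}\mathbf 1\{z_i\in A\}\prod_{n=2}^Nq(dz_n)$, $P_1(z,\cdot)=\delta_z$; for real $\lambda\ge1$, $P_\lambda=\beta P_{\lfloor\lambda\rfloor}+(1-\beta)P_{\lfloor\lambda\rfloor+1}$ with $\beta=\lfloor\lambda\rfloor+1-\lambda$. $\langle g,h\rangle_\pi=\int gh\,d\pi$, $\|g\|_\pi^2=\langle g,g\rangle_\pi$, $P_\lambda f(x)=\int f(y)P_\lambda(x,dy)$. *)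

theory Defs
  imports "HOL-Analysis.Analysis"
begin

definition iw :: "('a \<Rightarrow> real) \<Rightarrow> ('a \<Rightarrow> real) \<Rightarrow> 'a \<Rightarrow> real" where
  "iw p q x = (if p x > 0 then p x / q x else 0)"

text \<open>The multiple-proposal kernel P_N applied to f at the current state z1:
  z_2..z_N are i.i.d. from q(dx) = q(x) mu(dx) (product measure over the index set {2..N}),
  and z_1 is the current state.\<close>
definition PN :: "'a measure \<Rightarrow> ('a \<Rightarrow> real) \<Rightarrow> ('a \<Rightarrow> real) \<Rightarrow> nat \<Rightarrow> ('a \<Rightarrow> real) \<Rightarrow> 'a \<Rightarrow> real" where
  "PN M p q N f z1 =
     (if N \<le> 1 then f z1 else
      (\<integral>z. (let zz = z(1 := z1) in
              (\<Sum>i\<in>{1..N}. iw p q (zz i) / (\<Sum>j\<in>{1..N}. iw p q (zz j)) * f (zz i)))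
        \<partial>(PiM {2..N} (\<lambda>_. density M q))))"

definition Plam :: "'a measure \<Rightarrow> ('a \<Rightarrow> real) \<Rightarrow> ('a \<Rightarrow> real) \<Rightarrow> real \<Rightarrow> ('a \<Rightarrow> real) \<Rightarrow> 'a \<Rightarrow> real" where
  "Plam M p q lam f x =
     (let n = nat \<lfloor>lam\<rfloor>; \<beta> = real n + 1 - lam in
        \<beta> * PN M p q n f x + (1 - \<beta>) * PN M p q (n + 1) f x)"

definition Dir :: "'a measure \<Rightarrow> ('a \<Rightarrow> real) \<Rightarrow> ('a \<Rightarrow> real) \<Rightarrow> real \<Rightarrow> ('a \<Rightarrow> real) \<Rightarrow> real" where
  "Dir M p q lam f = (\<integral>x. f x * (f x - Plam M p q lam f x) \<partial>(density M p))"

end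

(* Write w = pi/q. For q-distributed i.i.d. samples z_i indexed by a finite set S let
   V(S) = sum_S w f^2 - (sum_S w f)^2 / sum_S w, the total weight times the w-weighted variance
   of the values f(z_i), and let T(N) be the mean of V over N samples. Splitting the Dirichlet
   form by exchangeability gives E_N(f) = T(N) / N, and E_lambda interpolates these values
   linearly. Two deterministic inequalities for weighted variances,
     sum_k V(S - k) <= (|S| - 1) V(S), with equality only if all points of positive weight
     carry the same value, and
     (|S| - 1)(|S| - 2) V(S) + sum_(k /= l) V(S - k - l) <= 2 (|S| - 2) sum_k V(S - k),
   integrate to strict monotonicity and concavity of N |-> T(N) / N (strictness because f is
   not pi-a.s. constant). As E_1(f) = 0, the interpolation is non-negative, continuous, concave
   and strictly increasing on [1, oo). *)

theory Submission
  imports Defs "HOL-Probability.Probability"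
begin

(* The total weight times the a-weighted variance of b; zero if all weights vanish. *)
definition wvar :: "('i \<Rightarrow> real) \<Rightarrow> ('i \<Rightarrow> real) \<Rightarrow> 'i set \<Rightarrow> real" where
  "wvar a b S = (\<Sum>i\<in>S. a i * (b i)\<^sup>2) - (\<Sum>i\<in>S. a i * b i)\<^sup>2 / (\<Sum>i\<in>S. a i)"

lemma weighted_Cauchy_Schwarz:
  fixes a b :: "'i \<Rightarrow> real"
  assumes "\<And>i. i \<in> S \<Longrightarrow> a i \<ge> 0"
  shows "(\<Sum>i\<in>S. a i * b i)\<^sup>2 \<le> (\<Sum>i\<in>S. a i) * (\<Sum>i\<in>S. a i * (b i)\<^sup>2)"
proof -
  have "(\<Sum>i\<in>S. a i * b i)\<^sup>2 = (\<Sum>i\<in>S. sqrt (a i) * (sqrt (a i) * b i))\<^sup>2"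
    using assms by (intro arg_cong[where f = "\<lambda>x. x\<^sup>2"] sum.cong) (auto simp flip: mult.assoc)
  also have "\<dots> \<le> (\<Sum>i\<in>S. (sqrt (a i))\<^sup>2) * (\<Sum>i\<in>S. (sqrt (a i) * b i)\<^sup>2)"
    by (rule Cauchy_Schwarz_ineq_sum)
  also have "\<dots> = (\<Sum>i\<in>S. a i) * (\<Sum>i\<in>S. a i * (b i)\<^sup>2)"
    using assms by (intro arg_cong2[where f = "(*)"] sum.cong) (auto simp: power_mult_distrib)
  finally show ?thesis .
qed

lemma wvar_nonneg:
  fixes a b :: "'i \<Rightarrow> real"
  assumes "\<And>i. i \<in> S \<Longrightarrow> a i \<ge> 0"
  shows "wvar a b S \<ge> 0"
proof (cases "(\<Sum>i\<in>S. a i) = 0")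
  case True
  then show ?thesis using assms by (simp add: wvar_def sum_nonneg)
next
  case False
  then have "(\<Sum>i\<in>S. a i) > 0" using assms by (simp add: order_less_le sum_nonneg)
  then show ?thesis
    using weighted_Cauchy_Schwarz[where a = a and b = b and S = S, OF assms]
    by (simp add: wvar_def field_simps)
qed

lemma wvar_zero_weights: "(\<And>i. i \<in> S \<Longrightarrow> a i = 0) \<Longrightarrow> wvar a b S = 0"
  by (simp add: wvar_def)

lemma wvar_shift:
  fixes a b :: "'i \<Rightarrow> real"
  assumes "finite S" "\<And>i. i \<in> S \<Longrightarrow> a i \<ge> 0"
  shows "wvar a (\<lambda>i. b i - t) S = wvar a b S"
proof (cases "(\<Sum>i\<in>S. a i) = 0")
  case True
  then show ?thesis using assms by (simp add: wvar_zero_weights sum_nonneg_eq_0_iff)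
next
  case False
  define W L B where "W = (\<Sum>i\<in>S. a i)" and "L = (\<Sum>i\<in>S. a i * (b i)\<^sup>2)"
    and "B = (\<Sum>i\<in>S. a i * b i)"
  have "(\<Sum>i\<in>S. a i * (b i - t)\<^sup>2) = L - 2 * t * B + t\<^sup>2 * W"
    unfolding W_def L_def B_def
    by (simp add: power2_diff algebra_simps sum.distrib sum_subtractf sum_distrib_left
      sum_distrib_right)
  moreover have "(\<Sum>i\<in>S. a i * (b i - t)) = B - t * W"
    unfolding W_def B_def by (simp add: algebra_simps sum_subtractf sum_distrib_left)
  moreover have "L - 2 * t * B + t\<^sup>2 * W - (B - t * W)\<^sup>2 / W = L - B\<^sup>2 / W"
    using False by (simp add: W_def field_simps power2_eq_square)
  ultimately show ?thesis by (simp add: wvar_def W_def L_def B_def)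
qed

lemma wvar_center:
  fixes a b :: "'i \<Rightarrow> real"
  assumes "finite S" "\<And>i. i \<in> S \<Longrightarrow> a i \<ge> 0" "(\<Sum>i\<in>S. a i) \<noteq> 0"
  obtains c where "(\<Sum>i\<in>S. a i * (b i - c)) = 0"
    and "\<And>T. T \<subseteq> S \<Longrightarrow> wvar a (\<lambda>i. b i - c) T = wvar a b T"
proof
  define c where "c = (\<Sum>i\<in>S. a i * b i) / (\<Sum>i\<in>S. a i)"
  have "(\<Sum>i\<in>S. a i * (b i - c)) = (\<Sum>i\<in>S. a i * b i) - c * (\<Sum>i\<in>S. a i)"
    by (simp add: algebra_simps sum_subtractf sum_distrib_left)
  then show "(\<Sum>i\<in>S. a i * (b i - c)) = 0" using assms(3) by (simp add: c_def)
  show "wvar a (\<lambda>i. b i - c) T = wvar a b T" if "T \<subseteq> S" for T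
    using that assms by (intro wvar_shift) (auto intro: finite_subset)
qed

lemma sum_leave_one_out:
  fixes g :: "'i \<Rightarrow> real"
  assumes "finite S"
  shows "(\<Sum>k\<in>S. \<Sum>i\<in>S-{k}. g i) = (real (card S) - 1) * (\<Sum>i\<in>S. g i)"
  using assms by (simp add: sum_diff1 sum_subtractf algebra_simps)

lemma sum_leave_two_out:
  fixes g :: "'i \<Rightarrow> real"
  assumes "finite S"
  shows "(\<Sum>k\<in>S. \<Sum>l\<in>S-{k}. \<Sum>i\<in>S-{k}-{l}. g i)
       = (real (card S) - 1) * (real (card S) - 2) * (\<Sum>i\<in>S. g i)"
proof -
  have "(\<Sum>l\<in>S-{k}. \<Sum>i\<in>S-{k}-{l}. g i) = (real (card S) - 2) * ((\<Sum>i\<in>S. g i) - g k)"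
    if "k \<in> S" for k
    using that assms sum_leave_one_out[of "S - {k}" g] card_gt_0_iff[of S]
    by (auto simp: sum_diff1 of_nat_diff)
  then have "(\<Sum>k\<in>S. \<Sum>l\<in>S-{k}. \<Sum>i\<in>S-{k}-{l}. g i)
      = (\<Sum>k\<in>S. (real (card S) - 2) * ((\<Sum>i\<in>S. g i) - g k))"
    by (rule sum.cong[OF refl])
  also have "\<dots> = (real (card S) - 2) * (real (card S) * (\<Sum>i\<in>S. g i) - (\<Sum>i\<in>S. g i))"
    by (simp add: sum_distrib_left[symmetric] sum_subtractf)
  finally show ?thesis by (simp add: algebra_simps)
qed

lemma wvar_leave_one_out_centered:
  fixes a b :: "'i \<Rightarrow> real"
  assumes "finite S" "(\<Sum>i\<in>S. a i * b i) = 0"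
  shows "(real (card S) - 1) * wvar a b S - (\<Sum>k\<in>S. wvar a b (S - {k}))
       = (\<Sum>k\<in>S. (a k * b k)\<^sup>2 / ((\<Sum>i\<in>S. a i) - a k))"
proof -
  have "wvar a b (S - {k})
      = (\<Sum>i\<in>S-{k}. a i * (b i)\<^sup>2) - (a k * b k)\<^sup>2 / ((\<Sum>i\<in>S. a i) - a k)" if "k \<in> S" for k
    using assms that by (simp add: wvar_def sum_diff1)
  then have "(\<Sum>k\<in>S. wvar a b (S - {k}))
      = (real (card S) - 1) * (\<Sum>i\<in>S. a i * (b i)\<^sup>2) - (\<Sum>k\<in>S. (a k * b k)\<^sup>2 / ((\<Sum>i\<in>S. a i) - a k))"
    using assms(1) by (simp add: sum_subtractf sum_leave_one_out)
  then show ?thesis using assms(2) by (simp add: wvar_def)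
qed

lemma wvar_leave_one_out_gap:
  fixes a b :: "'i \<Rightarrow> real"
  assumes "finite S" "\<And>i. i \<in> S \<Longrightarrow> a i \<ge> 0" "(\<Sum>i\<in>S. a i) \<noteq> 0"
  obtains c where "(real (card S) - 1) * wvar a b S - (\<Sum>k\<in>S. wvar a b (S - {k}))
      = (\<Sum>k\<in>S. (a k * (b k - c))\<^sup>2 / ((\<Sum>i\<in>S. a i) - a k))"
proof -
  obtain c where c: "(\<Sum>i\<in>S. a i * (b i - c)) = 0"
    and shift: "\<And>T. T \<subseteq> S \<Longrightarrow> wvar a (\<lambda>i. b i - c) T = wvar a b T"
    using wvar_center[where a = a and b = b, OF assms] by blast
  have "(real (card S) - 1) * wvar a b S - (\<Sum>k\<in>S. wvar a b (S - {k}))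
      = (real (card S) - 1) * wvar a (\<lambda>i. b i - c) S - (\<Sum>k\<in>S. wvar a (\<lambda>i. b i - c) (S - {k}))"
    using shift by (simp add: Diff_subset)
  then show ?thesis using that wvar_leave_one_out_centered[OF assms(1) c] by simp
qed

lemma sum_minus_member_nonneg:
  fixes a :: "'i \<Rightarrow> real"
  assumes "finite S" "\<And>i. i \<in> S \<Longrightarrow> a i \<ge> 0" "k \<in> S"
  shows "(\<Sum>i\<in>S. a i) - a k \<ge> 0"
proof -
  have "a k \<le> (\<Sum>i\<in>S. a i)" using assms by (intro member_le_sum) auto
  then show ?thesis by simp
qed

lemma wvar_leave_one_out_le:
  fixes a b :: "'i \<Rightarrow> real"
  assumes "finite S" "\<And>i. i \<in> S \<Longrightarrow> a i \<ge> 0"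
  shows "(\<Sum>k\<in>S. wvar a b (S - {k})) \<le> (real (card S) - 1) * wvar a b S"
proof (cases "(\<Sum>i\<in>S. a i) = 0")
  case True
  then have "wvar a b T = 0" if "T \<subseteq> S" for T
    using that assms by (intro wvar_zero_weights) (auto simp: sum_nonneg_eq_0_iff)
  then show ?thesis by (simp add: Diff_subset)
next
  case False
  then obtain c where gap: "(real (card S) - 1) * wvar a b S - (\<Sum>k\<in>S. wvar a b (S - {k}))
      = (\<Sum>k\<in>S. (a k * (b k - c))\<^sup>2 / ((\<Sum>i\<in>S. a i) - a k))"
    using wvar_leave_one_out_gap[where a = a and b = b, OF assms] by blast
  have "(\<Sum>k\<in>S. (a k * (b k - c))\<^sup>2 / ((\<Sum>i\<in>S. a i) - a k)) \<ge> 0"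
    using sum_minus_member_nonneg[where a = a, OF assms] by (intro sum_nonneg) simp
  then show ?thesis using gap by simp
qed

lemma wvar_leave_one_out_less:
  fixes a b :: "'i \<Rightarrow> real"
  assumes "finite S" "\<And>i. i \<in> S \<Longrightarrow> a i \<ge> 0"
    and "i \<in> S" "j \<in> S" "a i * a j * (b i - b j)\<^sup>2 \<noteq> 0"
  shows "(\<Sum>k\<in>S. wvar a b (S - {k})) < (real (card S) - 1) * wvar a b S"
proof -
  have ij: "i \<noteq> j" and pos: "a i > 0" "a j > 0"
    using assms(2-5) by (auto simp: order_less_le)
  define W where "W = (\<Sum>i\<in>S. a i)"
  have "a j \<le> (\<Sum>l\<in>S-{i}. a l)" using assms(1-4) ij by (intro member_le_sum) auto
  then have "a i + a j \<le> W" using assms(1,3) by (simp add: W_def sum.remove)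
  then have W: "W \<noteq> 0" "W - a i > 0" "W - a j > 0" using pos by auto
  obtain c where gap: "(real (card S) - 1) * wvar a b S - (\<Sum>k\<in>S. wvar a b (S - {k}))
      = (\<Sum>k\<in>S. (a k * (b k - c))\<^sup>2 / (W - a k))"
    using wvar_leave_one_out_gap[where a = a and b = b, OF assms(1,2)] W(1) unfolding W_def by blast
  obtain k where k: "k \<in> S" "a k > 0" "W - a k > 0" "b k \<noteq> c"
    using assms(3,4,5) pos W by (cases "b i = c") auto
  have "(\<Sum>k\<in>S. (a k * (b k - c))\<^sup>2 / (W - a k)) > 0"
    using k sum_minus_member_nonneg[where a = a, OF assms(1,2)]
    by (intro sum_pos2[OF assms(1) k(1)]) (auto simp: W_def)
  then show ?thesis using gap by simp
qed

(* The case of quadratic_form_nonneg in which one weight A exceeds the sum d of the others: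
   y is the value at that index, and s, T, Q0, Q1 are the sums of x, a x, x^2, a x^2 over
   the remaining indices. *)
lemma quadratic_form_dominant_nonneg:
  fixes A d y s T Q0 Q1 :: real
  assumes "0 \<le> d" "d < A" "T\<^sup>2 \<le> d * Q1" "Q1 \<le> d * Q0" "0 \<le> Q0"
    and "d * y = T - (A + d) * s"
  shows "(A + d) * (y + s)\<^sup>2 + (A + d) * (y\<^sup>2 + Q0) - 2 * (A * y\<^sup>2 + Q1) \<ge> 0"
    (is "?C \<ge> 0")
proof (cases "d = 0")
  case True
  then have "T = 0" "Q1 \<le> 0" using assms(3,4) by simp_all
  then have "s = 0" using assms(2,6) True by simp
  moreover have "A * Q0 \<ge> 0" using assms(2,5) True by simp
  ultimately show ?thesis using True \<open>Q1 \<le> 0\<close> by (simp add: algebra_simps)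
next
  case False
  then have d: "d > 0" using assms(1) by simp
  have "d\<^sup>2 * ?C = (A + d) * (d * s - T)\<^sup>2 + T\<^sup>2 * (d - A) + d\<^sup>2 * (A + d) * Q0 - 2 * d\<^sup>2 * Q1"
  proof -
    have "T = d * y + (A + d) * s" using assms(6) by simp
    then show ?thesis by (simp add: power2_eq_square algebra_simps)
  qed
  also have "\<dots> \<ge> (A + d) * (d * s - T)\<^sup>2 + d * (A + d) * (d * Q0 - Q1)"
  proof -
    have "T\<^sup>2 * (d - A) \<ge> d * Q1 * (d - A)"
      using assms(2,3) by (intro mult_right_mono_neg) auto
    then show ?thesis by (simp add: power2_eq_square algebra_simps)
  qed
  finally have "d\<^sup>2 * ?C \<ge> 0"
    using assms(1,2,4) by (smt (verit) mult_nonneg_nonneg zero_le_power2)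
  then show ?thesis using d by (simp add: zero_le_mult_iff)
qed

lemma quadratic_form_nonneg:
  fixes a x :: "'i \<Rightarrow> real"
  assumes fin: "finite S" and nn: "\<And>i. i \<in> S \<Longrightarrow> a i \<ge> 0"
    and W: "W = (\<Sum>i\<in>S. a i)" and con: "W * (\<Sum>i\<in>S. x i) = (\<Sum>i\<in>S. a i * x i)"
  shows "W * (\<Sum>i\<in>S. x i)\<^sup>2 + W * (\<Sum>i\<in>S. (x i)\<^sup>2) - 2 * (\<Sum>i\<in>S. a i * (x i)\<^sup>2) \<ge> 0"
proof (cases "\<forall>k\<in>S. 2 * a k \<le> W")
  case True
  have "W * (\<Sum>i\<in>S. (x i)\<^sup>2) - 2 * (\<Sum>i\<in>S. a i * (x i)\<^sup>2) = (\<Sum>i\<in>S. (x i)\<^sup>2 * (W - 2 * a i))"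
    by (simp add: algebra_simps sum_subtractf sum_distrib_left)
  also have "\<dots> \<ge> 0" using True by (intro sum_nonneg) auto
  moreover have "W * (\<Sum>i\<in>S. x i)\<^sup>2 \<ge> 0" using nn by (simp add: W sum_nonneg)
  ultimately show ?thesis by linarith
next
  case False
  then obtain j where j: "j \<in> S" "2 * a j > W" by force
  define R where "R = S - {j}"
  have split: "(\<Sum>i\<in>S. g i) = g j + (\<Sum>i\<in>R. g i)" for g :: "'i \<Rightarrow> real"
    unfolding R_def using fin j(1) by (simp add: sum.remove)
  define d s T Q0 Q1 where "d = (\<Sum>i\<in>R. a i)" and "s = (\<Sum>i\<in>R. x i)"
    and "T = (\<Sum>i\<in>R. a i * x i)" and "Q0 = (\<Sum>i\<in>R. (x i)\<^sup>2)" and "Q1 = (\<Sum>i\<in>R. a i * (x i)\<^sup>2)"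
  have nnR: "\<And>i. i \<in> R \<Longrightarrow> a i \<ge> 0" using nn by (simp add: R_def)
  have "d \<ge> 0" unfolding d_def using nnR by (simp add: sum_nonneg)
  moreover have "d < a j" using j W split[of a] by (simp add: d_def)
  moreover have "T\<^sup>2 \<le> d * Q1"
    unfolding T_def d_def Q1_def by (rule weighted_Cauchy_Schwarz[where a = a, OF nnR])
  moreover have "Q1 \<le> d * Q0"
  proof -
    have "a k \<le> d" if "k \<in> R" for k
      unfolding d_def using that fin nnR by (intro member_le_sum) (auto simp: R_def)
    then have "Q1 \<le> (\<Sum>i\<in>R. d * (x i)\<^sup>2)" unfolding Q1_def by (intro sum_mono mult_right_mono) auto
    then show ?thesis by (simp add: Q0_def sum_distrib_left)
  qed
  moreover have "Q0 \<ge> 0" unfolding Q0_def by (simp add: sum_nonneg)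
  moreover have "d * x j = T - (a j + d) * s"
    using con split[of a] split[of x] split[of "\<lambda>i. a i * x i"]
    by (simp add: W d_def s_def T_def algebra_simps)
  ultimately have "(a j + d) * (x j + s)\<^sup>2 + (a j + d) * ((x j)\<^sup>2 + Q0) - 2 * (a j * (x j)\<^sup>2 + Q1) \<ge> 0"
    by (rule quadratic_form_dominant_nonneg)
  then show ?thesis by (simp add: W split d_def s_def Q0_def Q1_def)
qed

lemma sum_offdiag_tangent_expansion:
  fixes a x :: "'i \<Rightarrow> real"
  assumes fin: "finite S" and W: "W = (\<Sum>i\<in>S. a i)"
  shows "(\<Sum>k\<in>S. \<Sum>l\<in>S-{k}. 2 * (x k * (W - a k) + x l * (W - a l)) * (x k + x l)
             - (x k + x l)\<^sup>2 * (W - a k - a l))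
       = 2 * (real (card S) - 2) * (\<Sum>k\<in>S. (x k)\<^sup>2 * (W - a k))
         + 2 * (W * (\<Sum>k\<in>S. x k)\<^sup>2 + W * (\<Sum>k\<in>S. (x k)\<^sup>2) - 2 * (\<Sum>k\<in>S. a k * (x k)\<^sup>2))"
proof -
  define F where "F k l = 2 * (x k * (W - a k) + x l * (W - a l)) * (x k + x l)
    - (x k + x l)\<^sup>2 * (W - a k - a l)" for k l
  define n X Q0 Q1 where "n = real (card S)" and "X = (\<Sum>k\<in>S. x k)"
    and "Q0 = (\<Sum>k\<in>S. (x k)\<^sup>2)" and "Q1 = (\<Sum>k\<in>S. a k * (x k)\<^sup>2)"
  have row: "(\<Sum>l\<in>S. F k l)
      = n * (W * (x k)\<^sup>2 - a k * (x k)\<^sup>2) + 2 * W * x k * X + W * Q0 + (x k)\<^sup>2 * W + a k * Q0 - Q1"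
        for k
  proof -
    have "(\<Sum>l\<in>S. F k l) = (\<Sum>l\<in>S. (W * (x k)\<^sup>2 - a k * (x k)\<^sup>2) + (2 * W * x k) * x l + W * (x l)\<^sup>2
        + (x k)\<^sup>2 * a l + a k * (x l)\<^sup>2 - a l * (x l)\<^sup>2)"
      unfolding F_def by (rule sum.cong) (auto simp: power2_eq_square algebra_simps)
    then show ?thesis unfolding X_def Q0_def Q1_def n_def W
      by (simp add: sum.distrib sum_subtractf sum_distrib_left[symmetric])
  qed
  have "(\<Sum>k\<in>S. \<Sum>l\<in>S-{k}. F k l) = (\<Sum>k\<in>S. (\<Sum>l\<in>S. F k l) - F k k)"
    using fin by (intro sum.cong) (simp_all add: sum_diff1)
  also have "\<dots> = (\<Sum>k\<in>S. (n * W - 3 * W) * (x k)\<^sup>2 - n * (a k * (x k)\<^sup>2) + (2 * W * X) * x k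
      + (W * Q0 - Q1) + Q0 * a k)"
    unfolding row by (intro sum.cong) (simp_all add: F_def power2_eq_square algebra_simps)
  also have "\<dots> = (n * W - 3 * W) * Q0 - n * Q1 + (2 * W * X) * X + n * (W * Q0 - Q1) + Q0 * W"
    unfolding X_def Q0_def Q1_def n_def W
    by (simp add: sum.distrib sum_subtractf sum_distrib_left[symmetric]
      sum_distrib_right[symmetric])
  finally have calc: "(\<Sum>k\<in>S. \<Sum>l\<in>S-{k}. F k l)
      = (n * W - 3 * W) * Q0 - n * Q1 + (2 * W * X) * X + n * (W * Q0 - Q1) + Q0 * W" .
  have sq: "(\<Sum>k\<in>S. (x k)\<^sup>2 * (W - a k)) = W * Q0 - Q1"
    unfolding Q0_def Q1_def by (simp add: algebra_simps sum_subtractf sum_distrib_left)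
  show ?thesis
    unfolding F_def[symmetric] n_def[symmetric] X_def[symmetric] Q0_def[symmetric] Q1_def[symmetric]
      sq calc
    by (simp add: algebra_simps power2_eq_square)
qed

lemma tangent_le_square_div:
  fixes u y D :: real
  assumes "D \<ge> 0" "D = 0 \<Longrightarrow> u = 0"
  shows "2 * u * y - y\<^sup>2 * D \<le> u\<^sup>2 / D"
proof (cases "D = 0")
  case False
  then have "u\<^sup>2 / D - (2 * u * y - y\<^sup>2 * D) = (u - y * D)\<^sup>2 / D"
    by (simp add: field_simps power2_eq_square)
  also have "\<dots> \<ge> 0" using assms(1) by simp
  finally show ?thesis by simp
qed (use assms in simp)

lemma centered_weights_vanish:
  fixes a b :: "'i \<Rightarrow> real"
  assumes "finite S" "\<And>i. i \<in> S \<Longrightarrow> a i \<ge> 0" "(\<Sum>i\<in>S. a i * b i) = 0"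
    and "U \<subseteq> S" "(\<Sum>i\<in>S - U. a i) = 0"
  shows "(\<Sum>i\<in>U. a i * b i) = 0"
proof -
  have "\<forall>i\<in>S - U. a i = 0" using assms(1,2,5) sum_nonneg_eq_0_iff[of "S - U" a] by auto
  then have "(\<Sum>i\<in>S - U. a i * b i) = 0" by simp
  then show ?thesis using assms(1,3,4) sum.subset_diff[of U S "\<lambda>i. a i * b i"] by simp
qed

lemma centered_complement_weights:
  fixes a b :: "'i \<Rightarrow> real"
  assumes fin: "finite S" and nn: "\<And>i. i \<in> S \<Longrightarrow> a i \<ge> 0"
    and cen: "(\<Sum>i\<in>S. a i * b i) = 0" and W: "W = (\<Sum>i\<in>S. a i)"
  shows "k \<in> S \<Longrightarrow> W - a k = 0 \<Longrightarrow> a k * b k = 0"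
    and "k \<in> S \<Longrightarrow> l \<in> S - {k} \<Longrightarrow> W - a k - a l \<ge> 0"
    and "k \<in> S \<Longrightarrow> l \<in> S - {k} \<Longrightarrow> W - a k - a l = 0 \<Longrightarrow> a k * b k + a l * b l = 0"
proof -
  note vanish = centered_weights_vanish[where a = a, OF fin nn cen]
  show "a k * b k = 0" if "k \<in> S" "W - a k = 0"
    using vanish[of "{k}"] that fin by (simp add: W sum_diff1)
  have rest: "W - a k - a l = (\<Sum>i\<in>S - {k, l}. a i)" if "k \<in> S" "l \<in> S - {k}" for k l
  proof -
    have "S - {k, l} = S - {k} - {l}" by auto
    then show ?thesis using fin that by (simp add: W sum_diff1)
  qed
  show "W - a k - a l \<ge> 0" if "k \<in> S" "l \<in> S - {k}"
    unfolding rest[OF that] using nn by (intro sum_nonneg) auto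
  show "a k * b k + a l * b l = 0" if "k \<in> S" "l \<in> S - {k}" "W - a k - a l = 0"
    using that vanish[of "{k, l}"] rest[OF that(1,2)] by auto
qed

lemma leave_two_out_key_ineq:
  fixes a b :: "'i \<Rightarrow> real"
  assumes fin: "finite S" and nn: "\<And>i. i \<in> S \<Longrightarrow> a i \<ge> 0"
    and cen: "(\<Sum>i\<in>S. a i * b i) = 0" and W: "W = (\<Sum>i\<in>S. a i)"
  shows "2 * (real (card S) - 2) * (\<Sum>k\<in>S. (a k * b k)\<^sup>2 / (W - a k))
     \<le> (\<Sum>k\<in>S. \<Sum>l\<in>S-{k}. (a k * b k + a l * b l)\<^sup>2 / (W - a k - a l))"
proof -
  have single: "a k * b k = 0" if "k \<in> S" "W - a k = 0" for k
    using centered_complement_weights(1)[OF fin nn cen W] that by blast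
  have pair: "W - a k - a l \<ge> 0" "W - a k - a l = 0 \<Longrightarrow> a k * b k + a l * b l = 0"
    if "k \<in> S" "l \<in> S - {k}" for k l
    using centered_complement_weights(2,3)[OF fin nn cen W] that by blast+
  \<comment> \<open>Each pair term is bounded below by its tangent at \<open>x k + x l\<close>.\<close>
  define x where "x k = a k * b k / (W - a k)" for k
  have x: "a k * b k = x k * (W - a k)" if "k \<in> S" for k
    using single[OF that] by (cases "W - a k = 0") (auto simp: x_def)
  have tangent: "(\<Sum>k\<in>S. \<Sum>l\<in>S-{k}. 2 * (x k * (W - a k) + x l * (W - a l)) * (x k + x l)
             - (x k + x l)\<^sup>2 * (W - a k - a l))
      \<le> (\<Sum>k\<in>S. \<Sum>l\<in>S-{k}. (a k * b k + a l * b l)\<^sup>2 / (W - a k - a l))"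
  proof (intro sum_mono)
    fix k l assume k: "k \<in> S" and l: "l \<in> S - {k}"
    have eq: "a k * b k + a l * b l = x k * (W - a k) + x l * (W - a l)" using x k l by simp
    have "2 * (a k * b k + a l * b l) * (x k + x l) - (x k + x l)\<^sup>2 * (W - a k - a l)
        \<le> (a k * b k + a l * b l)\<^sup>2 / (W - a k - a l)"
      by (rule tangent_le_square_div[OF pair[OF k l]])
    then show "2 * (x k * (W - a k) + x l * (W - a l)) * (x k + x l)
          - (x k + x l)\<^sup>2 * (W - a k - a l)
        \<le> (a k * b k + a l * b l)\<^sup>2 / (W - a k - a l)"
      by (simp only: eq)
  qed
  have lhs: "(\<Sum>k\<in>S. (a k * b k)\<^sup>2 / (W - a k)) = (\<Sum>k\<in>S. (x k)\<^sup>2 * (W - a k))"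
    using x by (intro sum.cong) (auto simp: power2_eq_square)
  have quadratic: "W * (\<Sum>k\<in>S. x k)\<^sup>2 + W * (\<Sum>k\<in>S. (x k)\<^sup>2) - 2 * (\<Sum>k\<in>S. a k * (x k)\<^sup>2) \<ge> 0"
  proof (rule quadratic_form_nonneg[OF fin nn W])
    have "(\<Sum>k\<in>S. x k * (W - a k)) = 0" using cen x by simp
    then show "W * (\<Sum>k\<in>S. x k) = (\<Sum>k\<in>S. a k * x k)"
      by (simp add: algebra_simps sum_subtractf sum_distrib_left)
  qed
  show ?thesis
    unfolding lhs using tangent quadratic sum_offdiag_tangent_expansion[OF fin W, of x] by argo
qed

lemma wvar_leave_two_out_centered:
  fixes a b :: "'i \<Rightarrow> real"
  assumes "finite S" "(\<Sum>i\<in>S. a i * b i) = 0"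
  shows "(\<Sum>k\<in>S. \<Sum>l\<in>S-{k}. wvar a b (S - {k} - {l}))
       = (real (card S) - 1) * (real (card S) - 2) * wvar a b S
         - (\<Sum>k\<in>S. \<Sum>l\<in>S-{k}. (a k * b k + a l * b l)\<^sup>2 / ((\<Sum>i\<in>S. a i) - a k - a l))"
proof -
  have "wvar a b (S - {k} - {l}) = (\<Sum>i\<in>S-{k}-{l}. a i * (b i)\<^sup>2)
      - (a k * b k + a l * b l)\<^sup>2 / ((\<Sum>i\<in>S. a i) - a k - a l)" if "k \<in> S" "l \<in> S - {k}" for k l
  proof -
    have "(\<Sum>i\<in>S-{k}-{l}. a i * b i) = - (a k * b k + a l * b l)"
      using assms that by (simp add: sum_diff1)
    then have sq: "(\<Sum>i\<in>S-{k}-{l}. a i * b i)\<^sup>2 = (a k * b k + a l * b l)\<^sup>2"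
      by (simp only: power2_minus)
    show ?thesis unfolding wvar_def sq using assms(1) that by (simp add: sum_diff1)
  qed
  then have "(\<Sum>k\<in>S. \<Sum>l\<in>S-{k}. wvar a b (S - {k} - {l}))
      = (\<Sum>k\<in>S. \<Sum>l\<in>S-{k}. \<Sum>i\<in>S-{k}-{l}. a i * (b i)\<^sup>2)
        - (\<Sum>k\<in>S. \<Sum>l\<in>S-{k}. (a k * b k + a l * b l)\<^sup>2 / ((\<Sum>i\<in>S. a i) - a k - a l))"
    by (simp add: sum_subtractf)
  then show ?thesis using assms by (simp add: sum_leave_two_out wvar_def)
qed

lemma wvar_leave_two_out:
  fixes a b :: "'i \<Rightarrow> real"
  assumes fin: "finite S" and nn: "\<And>i. i \<in> S \<Longrightarrow> a i \<ge> 0"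
  shows "(real (card S) - 1) * (real (card S) - 2) * wvar a b S
           + (\<Sum>k\<in>S. \<Sum>l\<in>S-{k}. wvar a b (S - {k} - {l}))
       \<le> 2 * (real (card S) - 2) * (\<Sum>k\<in>S. wvar a b (S - {k}))"
proof (cases "(\<Sum>i\<in>S. a i) = 0")
  case True
  then have "wvar a b T = 0" if "T \<subseteq> S" for T
    using that fin nn by (intro wvar_zero_weights) (auto simp: sum_nonneg_eq_0_iff)
  then show ?thesis by (simp add: Diff_subset subset_iff)
next
  case False
  obtain c where cen: "(\<Sum>i\<in>S. a i * (b i - c)) = 0"
    and shift: "\<And>T. T \<subseteq> S \<Longrightarrow> wvar a (\<lambda>i. b i - c) T = wvar a b T"
    using wvar_center[where a = a and b = b, OF fin nn False] by blast
  define b' n W where "b' = (\<lambda>i. b i - c)" and "n = real (card S)" and "W = (\<Sum>i\<in>S. a i)"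
  have "2 * (n - 2) * (\<Sum>k\<in>S. (a k * b' k)\<^sup>2 / (W - a k))
      \<le> (\<Sum>k\<in>S. \<Sum>l\<in>S-{k}. (a k * b' k + a l * b' l)\<^sup>2 / (W - a k - a l))"
    unfolding n_def using leave_two_out_key_ineq[where a = a and b = b', OF fin nn] cen
    by (simp add: b'_def W_def)
  moreover have "(n - 1) * wvar a b' S - (\<Sum>k\<in>S. wvar a b' (S - {k}))
      = (\<Sum>k\<in>S. (a k * b' k)\<^sup>2 / (W - a k))"
    using wvar_leave_one_out_centered[OF fin, of a b'] cen by (simp add: b'_def n_def W_def)
  moreover have "(\<Sum>k\<in>S. \<Sum>l\<in>S-{k}. wvar a b' (S - {k} - {l})) = (n - 1) * (n - 2) * wvar a b' S
      - (\<Sum>k\<in>S. \<Sum>l\<in>S-{k}. (a k * b' k + a l * b' l)\<^sup>2 / (W - a k - a l))"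
    using wvar_leave_two_out_centered[OF fin, of a b'] cen by (simp add: b'_def n_def W_def)
  moreover have "wvar a b' T = wvar a b T" if "T \<subseteq> S" for T
    using shift[OF that] by (simp add: b'_def)
  ultimately show ?thesis unfolding n_def[symmetric]
    by (simp add: Diff_subset subset_iff algebra_simps)
qed

definition wmean :: "('i \<Rightarrow> real) \<Rightarrow> ('i \<Rightarrow> real) \<Rightarrow> 'i set \<Rightarrow> real" where
  "wmean a b S = (\<Sum>i\<in>S. a i / (\<Sum>j\<in>S. a j) * b i)"

lemma wmean_eq: "wmean a b S = (\<Sum>i\<in>S. a i * b i) / (\<Sum>i\<in>S. a i)"
  by (simp add: wmean_def sum_divide_distrib)

lemma wvar_eq_sum_dev:
  fixes a b :: "'i \<Rightarrow> real"
  shows "(\<Sum>k\<in>S. a k * (b k * (b k - wmean a b S))) = wvar a b S"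
proof -
  have "(\<Sum>k\<in>S. a k * (b k * (b k - wmean a b S)))
      = (\<Sum>k\<in>S. a k * (b k)\<^sup>2) - wmean a b S * (\<Sum>k\<in>S. a k * b k)"
    by (simp add: algebra_simps power2_eq_square sum_subtractf sum_distrib_left)
  then show ?thesis by (simp add: wvar_def wmean_eq power2_eq_square)
qed

lemma abs_wmean_le:
  fixes a b :: "'i \<Rightarrow> real"
  assumes "finite S" "\<And>i. i \<in> S \<Longrightarrow> a i \<ge> 0" "k \<in> S" "a k > 0"
  shows "\<bar>wmean a b S\<bar> \<le> (\<Sum>i\<in>S. a i * \<bar>b i\<bar>) / a k"
proof -
  have W: "a k \<le> (\<Sum>j\<in>S. a j)" using assms by (intro member_le_sum) auto
  have "\<bar>wmean a b S\<bar> \<le> (\<Sum>i\<in>S. \<bar>a i / (\<Sum>j\<in>S. a j) * b i\<bar>)"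
    unfolding wmean_def by (rule sum_abs)
  also have "\<dots> \<le> (\<Sum>i\<in>S. a i * \<bar>b i\<bar> / a k)"
  proof (rule sum_mono)
    fix i assume "i \<in> S"
    then show "\<bar>a i / (\<Sum>j\<in>S. a j) * b i\<bar> \<le> a i * \<bar>b i\<bar> / a k"
      using assms(2,4) W by (simp add: abs_mult divide_left_mono)
  qed
  finally show ?thesis by (simp add: sum_divide_distrib)
qed

lemma abs_weighted_dev_le:
  fixes a b :: "'i \<Rightarrow> real"
  assumes fin: "finite S" and nn: "\<And>i. i \<in> S \<Longrightarrow> a i \<ge> 0" and k: "k \<in> S"
  shows "\<bar>a k * (b k * (b k - wmean a b S))\<bar> \<le> 2 * (\<Sum>i\<in>S. a i * (b i)\<^sup>2)"
proof -
  define W B L where "W = (\<Sum>j\<in>S. a j)" and "B = (\<Sum>i\<in>S. a i * b i)"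
    and "L = (\<Sum>i\<in>S. a i * (b i)\<^sup>2)"
  have ak: "0 \<le> a k" "a k \<le> W" "a k * (b k)\<^sup>2 \<le> L"
    using fin k nn by (auto simp: W_def L_def intro!: member_le_sum[of k S])
  have L: "L \<ge> 0" unfolding L_def using nn by (simp add: sum_nonneg)
  have CS: "B\<^sup>2 \<le> W * L" unfolding B_def W_def L_def by (rule weighted_Cauchy_Schwarz[OF nn])
  have cross: "\<bar>a k * b k * B / W\<bar> \<le> L"
  proof (cases "W = 0")
    case False
    then have W: "W > 0" using ak by simp
    have "(a k * b k * B)\<^sup>2 = (a k * (a k * (b k)\<^sup>2)) * B\<^sup>2"
      by (simp add: power2_eq_square algebra_simps)
    also have "\<dots> \<le> (W * L) * (W * L)" using ak CS W L by (intro mult_mono) (auto intro: mult_mono)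
    finally have "(a k * b k * B)\<^sup>2 \<le> (W * L)\<^sup>2" by (simp add: power2_eq_square)
    then have "\<bar>a k * b k * B\<bar> \<le> \<bar>W * L\<bar>" by (simp only: abs_le_square_iff)
    then show ?thesis using W L by (simp add: abs_div divide_le_eq mult.commute abs_mult)
  qed (use L in simp)
  have "\<bar>a k * (b k * (b k - B / W))\<bar> \<le> \<bar>a k * (b k)\<^sup>2\<bar> + \<bar>a k * b k * B / W\<bar>"
    using abs_triangle_ineq4[of "a k * (b k)\<^sup>2" "a k * b k * B / W"]
    by (simp add: algebra_simps power2_eq_square)
  also have "\<dots> \<le> L + L" using ak cross by simp
  finally show ?thesis by (simp add: wmean_eq B_def W_def L_def)
qed

definition lin_interp :: "(nat \<Rightarrow> real) \<Rightarrow> real \<Rightarrow> real" where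
  "lin_interp D x =
    D (nat \<lfloor>x\<rfloor>) + (x - real (nat \<lfloor>x\<rfloor>)) * (D (nat \<lfloor>x\<rfloor> + 1) - D (nat \<lfloor>x\<rfloor>))"

lemma lin_interp_piece:
  assumes "real n \<le> x" "x \<le> real n + 1"
  shows "lin_interp D x = D n + (x - real n) * (D (n + 1) - D n)"
proof (cases "x = real n + 1")
  case True
  then have "nat \<lfloor>x\<rfloor> = n + 1" by simp
  then show ?thesis using True by (simp add: lin_interp_def)
next
  case False
  then have "\<lfloor>x\<rfloor> = int n" using assms by (simp add: floor_eq_iff)
  then show ?thesis by (simp add: lin_interp_def)
qed

lemma nat_floor_bounds:
  fixes x :: real
  assumes "x \<ge> 0"
  shows "real (nat \<lfloor>x\<rfloor>) \<le> x" "x < real (nat \<lfloor>x\<rfloor>) + 1"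
  using assms by simp_all

lemma continuous_on_lin_interp: "continuous_on {1..} (lin_interp D)"
proof (intro continuous_at_imp_continuous_on ballI)
  fix x :: real assume "x \<in> {1..}"
  define n where "n = nat \<lfloor>x\<rfloor>"
  have n: "1 \<le> n" "real n \<le> x" "x < real n + 1"
    using \<open>x \<in> {1..}\<close> nat_floor_bounds[of x] by (auto simp: n_def le_nat_iff le_floor_iff)
  have piece: "continuous_on {real m..real m + 1} (lin_interp D)" for m
    by (rule continuous_on_eq[where f = "\<lambda>x. D m + (x - real m) * (D (m + 1) - D m)"])
      (auto intro!: continuous_intros simp: lin_interp_piece)
  have "continuous_on ({real (n - 1)..real (n - 1) + 1} \<union> {real n..real n + 1}) (lin_interp D)"
    by (intro continuous_on_closed_Un piece) auto
  moreover have "{real (n - 1)..real (n - 1) + 1} \<union> {real n..real n + 1} = {real n - 1..real n + 1}"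
    using n(1) by (auto simp: of_nat_diff)
  ultimately show "isCont (lin_interp D) x"
    using n by (intro continuous_on_interior[where S = "{real n - 1..real n + 1}"]) auto
qed

lemma concave_seq_chord:
  fixes D :: "nat \<Rightarrow> real"
  assumes conc: "\<And>n. n \<ge> 1 \<Longrightarrow> D (n + 2) - D (n + 1) \<le> D (n + 1) - D n"
    and "1 \<le> n" "1 \<le> k"
  shows "D k \<le> D n + (real k - real n) * (D (n + 1) - D n)"
proof -
  define \<Delta> where "\<Delta> m = D (Suc m) - D m" for m
  have anti: "\<Delta> j \<le> \<Delta> i" if "1 \<le> i" "i \<le> j" for i j
    using that(2)
  proof (induction j rule: dec_induct)
    case (step j)
    then show ?case using conc[of j] that(1) by (simp add: \<Delta>_def)
  qed simp
  show ?thesis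
  proof (cases "n \<le> k")
    case True
    have "D k - D n = (\<Sum>m = n..<k. \<Delta> m)" using True by (simp add: \<Delta>_def sum_Suc_diff')
    also have "\<dots> \<le> real (card {n..<k}) * \<Delta> n" using anti assms(2) by (intro sum_bounded_above) auto
    finally show ?thesis using True by (simp add: \<Delta>_def of_nat_diff)
  next
    case False
    have "D n - D k = (\<Sum>m = k..<n. \<Delta> m)" using False by (simp add: \<Delta>_def sum_Suc_diff')
    also have "\<dots> \<ge> real (card {k..<n}) * \<Delta> n" using anti assms(3) by (intro sum_bounded_below) auto
    finally show ?thesis using False by (simp add: \<Delta>_def of_nat_diff algebra_simps)
  qed
qed

lemma lin_interp_le_tangent:
  fixes D :: "nat \<Rightarrow> real"
  assumes conc: "\<And>n. n \<ge> 1 \<Longrightarrow> D (n + 2) - D (n + 1) \<le> D (n + 1) - D n"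
    and "1 \<le> n" "1 \<le> y"
  shows "lin_interp D y \<le> D n + (y - real n) * (D (n + 1) - D n)"
proof -
  define m where "m = nat \<lfloor>y\<rfloor>"
  have m: "1 \<le> m" "real m \<le> y" "y \<le> real m + 1"
    using assms(3) nat_floor_bounds[of y] by (auto simp: m_def le_nat_iff le_floor_iff)
  have "lin_interp D y = (real m + 1 - y) * D m + (y - real m) * D (m + 1)"
    using lin_interp_piece[OF m(2,3)] by (simp add: algebra_simps)
  also have "\<dots> \<le> (real m + 1 - y) * (D n + (real m - real n) * (D (n + 1) - D n))
      + (y - real m) * (D n + (real (m + 1) - real n) * (D (n + 1) - D n))"
  proof -
    have "D m \<le> D n + (real m - real n) * (D (n + 1) - D n)"
      using concave_seq_chord[OF conc assms(2) m(1)] .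
    moreover have "D (m + 1) \<le> D n + (real (m + 1) - real n) * (D (n + 1) - D n)"
      using concave_seq_chord[OF conc assms(2), of "m + 1"] by simp
    ultimately show ?thesis using m by (intro add_mono mult_left_mono) auto
  qed
  also have "\<dots> = D n + (y - real n) * (D (n + 1) - D n)" by (simp add: algebra_simps)
  finally show ?thesis .
qed

lemma concave_on_lin_interp:
  fixes D :: "nat \<Rightarrow> real"
  assumes conc: "\<And>n. n \<ge> 1 \<Longrightarrow> D (n + 2) - D (n + 1) \<le> D (n + 1) - D n"
  shows "concave_on {1..} (lin_interp D)"
proof (rule concave_on_linorderI)
  fix t x y :: real assume t: "0 < t" "t < 1" and xy: "x \<in> {1..}" "y \<in> {1..}"
  define z where "z = (1 - t) * x + t * y"
  have "(1 - t) * 1 + t * 1 \<le> z" unfolding z_def using t xy by (intro add_mono mult_left_mono) auto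
  then have z: "1 \<le> z" by simp
  define n where "n = nat \<lfloor>z\<rfloor>"
  have n: "1 \<le> n" "real n \<le> z" "z \<le> real n + 1"
    using z nat_floor_bounds[of z] by (auto simp: n_def le_nat_iff le_floor_iff)
  have "(1 - t) * lin_interp D x + t * lin_interp D y
      \<le> (1 - t) * (D n + (x - real n) * (D (n + 1) - D n))
        + t * (D n + (y - real n) * (D (n + 1) - D n))"
    using lin_interp_le_tangent[OF conc n(1)] t xy by (intro add_mono mult_left_mono) auto
  also have "\<dots> = lin_interp D z"
    using lin_interp_piece[OF n(2,3)] by (simp add: z_def algebra_simps)
  finally show "(1 - t) * lin_interp D x + t * lin_interp D y
      \<le> lin_interp D ((1 - t) *\<^sub>R x + t *\<^sub>R y)"
    by (simp add: z_def)
qed (rule convex_real_interval)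

lemma strict_mono_on_lin_interp:
  fixes D :: "nat \<Rightarrow> real"
  assumes inc: "\<And>n. n \<ge> 1 \<Longrightarrow> D n < D (Suc n)"
  shows "strict_mono_on {1..} (lin_interp D)"
proof (rule strict_mono_onI)
  fix x y :: real assume x: "x \<in> {1..}" and y: "y \<in> {1..}" and "x < y"
  define n m where "n = nat \<lfloor>x\<rfloor>" and "m = nat \<lfloor>y\<rfloor>"
  have n: "1 \<le> n" "real n \<le> x" "x \<le> real n + 1" "x < real n + 1"
    using x nat_floor_bounds[of x] by (auto simp: n_def le_nat_iff le_floor_iff)
  have m: "real m \<le> y" "y \<le> real m + 1"
    using y nat_floor_bounds[of y] by (auto simp: m_def)
  have "n \<le> m" using \<open>x < y\<close> by (simp add: n_def m_def floor_mono nat_mono)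
  have slope: "D (k + 1) - D k > 0" if "1 \<le> k" for k using inc[OF that] by simp
  show "lin_interp D x < lin_interp D y"
  proof (cases "n = m")
    case True
    then show ?thesis
      using lin_interp_piece[where D = D, OF n(2,3)] lin_interp_piece[where D = D, OF m]
        slope[OF n(1)] \<open>x < y\<close> by simp
  next
    case False
    have "n + 1 \<le> m" using \<open>n \<le> m\<close> False by simp
    then have "D (n + 1) \<le> D m"
    proof (induction m rule: dec_induct)
      case (step k)
      then show ?case using inc[of k] n(1) by simp
    qed auto
    moreover have "lin_interp D x < D (n + 1)"
    proof -
      have "(x - real n) * (D (n + 1) - D n) < 1 * (D (n + 1) - D n)"
        using n slope[OF n(1)] by (intro mult_strict_right_mono) auto
      then show ?thesis using lin_interp_piece[where D = D, OF n(2,3)] by simp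
    qed
    moreover have "D m \<le> lin_interp D y"
      using lin_interp_piece[where D = D, OF m] slope[of m] n(1) \<open>n \<le> m\<close> m(1) by simp
    ultimately show ?thesis by linarith
  qed
qed

lemma lin_interp_nonneg:
  fixes D :: "nat \<Rightarrow> real"
  assumes "D 1 \<ge> 0" "\<And>n. n \<ge> 1 \<Longrightarrow> D n < D (Suc n)" "x \<ge> 1"
  shows "lin_interp D x \<ge> 0"
proof -
  have "lin_interp D 1 \<le> lin_interp D x"
    using strict_mono_on_leD[OF strict_mono_on_lin_interp[where D = D, OF assms(2)]] assms(3)
    by simp
  moreover have "lin_interp D 1 = D 1" using lin_interp_piece[of 1 1 D] by simp
  ultimately show ?thesis using assms(1) by simp
qed

lemma prob_space_density:
  fixes M :: "'a measure" and g :: "'a \<Rightarrow> real"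
  assumes "g \<in> borel_measurable M" "(\<integral>\<^sup>+ x. ennreal (g x) \<partial>M) = 1"
  shows "prob_space (density M (\<lambda>x. ennreal (g x)))"
proof (rule prob_spaceI)
  have "emeasure (density M (\<lambda>x. ennreal (g x))) (space M)
      = (\<integral>\<^sup>+ x. ennreal (g x) * indicator (space M) x \<partial>M)"
    using assms(1) by (simp add: emeasure_density)
  also have "\<dots> = (\<integral>\<^sup>+ x. ennreal (g x) \<partial>M)"
    by (intro nn_integral_cong) (simp add: indicator_def)
  finally show "emeasure (density M (\<lambda>x. ennreal (g x)))
      (space (density M (\<lambda>x. ennreal (g x)))) = 1"
    using assms(2) by simp
qed

locale multiple_proposal =
  fixes M :: "'a measure" and p q :: "'a \<Rightarrow> real"
  assumes p_measurable[measurable]: "p \<in> borel_measurable M"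
    and p_nonneg: "\<And>x. x \<in> space M \<Longrightarrow> p x \<ge> 0"
    and p_normalized: "(\<integral>\<^sup>+ x. ennreal (p x) \<partial>M) = 1"
    and q_measurable[measurable]: "q \<in> borel_measurable M"
    and q_nonneg: "\<And>x. x \<in> space M \<Longrightarrow> q x \<ge> 0"
    and q_normalized: "(\<integral>\<^sup>+ x. ennreal (q x) \<partial>M) = 1"
    and q_pos: "\<And>x. x \<in> space M \<Longrightarrow> p x > 0 \<Longrightarrow> q x > 0"
begin

abbreviation "target \<equiv> density M (\<lambda>x. ennreal (p x))"
abbreviation "proposal \<equiv> density M (\<lambda>x. ennreal (q x))"
abbreviation "samples I \<equiv> PiM I (\<lambda>_. proposal)"
abbreviation "w \<equiv> iw p q"

lemma w_measurable[measurable]: "w \<in> borel_measurable M"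
  unfolding iw_def[abs_def] by measurable

lemma w_nonneg: "x \<in> space M \<Longrightarrow> w x \<ge> 0"
  using q_pos[of x] by (auto simp: iw_def less_imp_le)

lemma prob_space_target: "prob_space target"
  by (rule prob_space_density) (simp_all add: p_normalized)

lemma prob_space_proposal: "prob_space proposal"
  by (rule prob_space_density) (simp_all add: q_normalized)

lemma prob_space_samples: "prob_space (samples I)"
  by (rule prob_space_PiM) (rule prob_space_proposal)

lemma target_eq_weighted_proposal: "target = density proposal (\<lambda>x. ennreal (w x))"
proof -
  have "density proposal (\<lambda>x. ennreal (w x)) = density M (\<lambda>x. ennreal (q x) * ennreal (w x))"
    by (rule density_density_eq) measurable
  also have "\<dots> = target"
  proof (rule density_cong)
    show "AE x in M. ennreal (q x) * ennreal (w x) = ennreal (p x)"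
      using p_nonneg q_nonneg w_nonneg q_pos
      by (intro AE_I2) (auto simp: iw_def less_le ennreal_mult[symmetric])
  qed measurable
  finally show ?thesis by simp
qed

lemma integral_target:
  "g \<in> borel_measurable M \<Longrightarrow> integral\<^sup>L target g = (\<integral>x. w x * g x \<partial>proposal)"
  unfolding target_eq_weighted_proposal by (subst integral_density) (auto simp: w_nonneg)

lemma integrable_target:
  "g \<in> borel_measurable M \<Longrightarrow> integrable target g \<longleftrightarrow> integrable proposal (\<lambda>x. w x * g x)"
  unfolding target_eq_weighted_proposal by (subst integrable_density) (auto simp: w_nonneg)

lemma integrable_w: "integrable proposal w" and integral_w: "(\<integral>x. w x \<partial>proposal) = 1"
proof -
  interpret prob_space target by (rule prob_space_target)
  show "integrable proposal w" using integrable_target[of "\<lambda>x. 1"] by simp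
  show "(\<integral>x. w x \<partial>proposal) = 1" using integral_target[of "\<lambda>x. 1"] prob_space by simp
qed

lemma space_samples_component: "z \<in> space (samples I) \<Longrightarrow> i \<in> I \<Longrightarrow> z i \<in> space M"
  by (auto simp: space_PiM)

lemma measurable_component:
  fixes g :: "'a \<Rightarrow> real"
  assumes "i \<in> I" "g \<in> borel_measurable M"
  shows "(\<lambda>z. g (z i)) \<in> borel_measurable (samples I)"
  using measurable_component_singleton[OF assms(1), of "\<lambda>_. proposal"] assms(2)
  by (simp add: measurable_compose)

lemma integrable_component:
  fixes g :: "'a \<Rightarrow> real"
  assumes "i \<in> I" "integrable proposal g"
  shows "integrable (samples I) (\<lambda>z. g (z i))"
proof -
  have "distr (samples I) proposal (\<lambda>z. z i) = proposal"
    using assms(1) by (intro distr_PiM_component) (auto intro: prob_space_proposal)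
  moreover have "g \<in> borel_measurable proposal" using assms(2) by simp
  then have "integrable (distr (samples I) proposal (\<lambda>z. z i)) g
      \<longleftrightarrow> integrable (samples I) (\<lambda>z. g (z i))"
    by (rule integrable_distr_eq[OF measurable_component_singleton[OF assms(1)]])
  ultimately show ?thesis using assms(2) by simp
qed

lemma integral_reindex:
  fixes g :: "(nat \<Rightarrow> 'a) \<Rightarrow> real" and t :: "nat \<Rightarrow> nat"
  assumes "inj_on t I" "t \<in> I \<rightarrow> K" "g \<in> borel_measurable (samples I)"
  shows "(\<integral>\<omega>. g (\<lambda>n\<in>I. \<omega> (t n)) \<partial>samples K) = integral\<^sup>L (samples I) g"
proof -
  have m: "(\<lambda>\<omega>. \<lambda>n\<in>I. \<omega> (t n)) \<in> measurable (samples K) (samples I)"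
    using assms(2) by (intro measurable_restrict measurable_component_singleton) auto
  have "distr (samples K) (samples I) (\<lambda>\<omega>. \<lambda>n\<in>I. \<omega> (t n)) = samples I"
    using distr_PiM_reindex[of K "\<lambda>_. proposal" t I] assms(1,2) prob_space_proposal by simp
  then show ?thesis using integral_distr[OF m assms(3)] by simp
qed

lemma integral_two_components:
  fixes g h :: "'a \<Rightarrow> real" and S :: "nat set"
  assumes fin: "finite S" and ij: "i \<in> S" "j \<in> S" "i \<noteq> j"
    and g: "integrable proposal g" and h: "integrable proposal h"
  shows "integrable (samples S) (\<lambda>z. g (z i) * h (z j))"
    and "(\<integral>z. g (z i) * h (z j) \<partial>samples S) = integral\<^sup>L proposal g * integral\<^sup>L proposal h"
proof -
  interpret Q: prob_space proposal by (rule prob_space_proposal)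
  interpret P: product_sigma_finite "\<lambda>_::nat. proposal" by unfold_locales
  define F where "F k = (if k = i then g else if k = j then h else (\<lambda>_. 1::real))" for k
  have F: "integrable proposal (F k)" for k unfolding F_def using g h by auto
  have prod: "(\<Prod>k\<in>S. G k) = G i * G j" if "\<forall>k\<in>S-{i}-{j}. G k = 1" for G :: "nat \<Rightarrow> real"
    using fin ij that by (simp add: prod.remove[of S i] prod.remove[of "S - {i}" j] prod.neutral)
  have eq: "(\<Prod>k\<in>S. F k (z k)) = g (z i) * h (z j)" for z
    using prod[of "\<lambda>k. F k (z k)"] ij by (simp add: F_def)
  have "integrable (samples S) (\<lambda>z. \<Prod>k\<in>S. F k (z k))"
    by (rule P.product_integrable_prod[OF fin]) (rule F)
  then show "integrable (samples S) (\<lambda>z. g (z i) * h (z j))" unfolding eq .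
  have "(\<integral>z. (\<Prod>k\<in>S. F k (z k)) \<partial>samples S) = (\<Prod>k\<in>S. integral\<^sup>L proposal (F k))"
    by (rule P.product_integral_prod[OF fin]) (rule F)
  also have "\<dots> = integral\<^sup>L proposal g * integral\<^sup>L proposal h"
    using ij Q.prob_space by (subst prod) (auto simp: F_def)
  finally show "(\<integral>z. g (z i) * h (z j) \<partial>samples S) = integral\<^sup>L proposal g * integral\<^sup>L proposal h"
    unfolding eq .
qed

lemma measurable_update_first:
  assumes "sets X = sets M"
  shows "(\<lambda>(x, z). z(1 := x)) \<in> measurable (X \<Otimes>\<^sub>M samples J) (samples (insert 1 J))"
proof -
  have "fst \<in> measurable (X \<Otimes>\<^sub>M samples J) M"
    using measurable_fst[of X "samples J"] unfolding measurable_cong_sets[OF refl assms] .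
  then have "(\<lambda>y. (snd y)(1 := fst y)) \<in> measurable (X \<Otimes>\<^sub>M samples J) (samples (J \<union> {1}))"
    by (intro measurable_fun_upd[where J = J]) auto
  then show ?thesis by (simp add: case_prod_beta')
qed

lemma integral_split_first:
  fixes g :: "(nat \<Rightarrow> 'a) \<Rightarrow> real"
  assumes "1 \<notin> J" and g: "integrable (samples (insert 1 J)) g"
  shows "integrable proposal (\<lambda>x. \<integral>z. g (z(1 := x)) \<partial>samples J)"
    and "integral\<^sup>L (samples (insert 1 J)) g = (\<integral>x. (\<integral>z. g (z(1 := x)) \<partial>samples J) \<partial>proposal)"
proof -
  interpret Q: prob_space proposal by (rule prob_space_proposal)
  interpret J: prob_space "samples J" by (rule prob_space_samples)
  interpret QJ: pair_sigma_finite proposal "samples J" by unfold_locales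
  note m = measurable_update_first[of proposal J]
  have d: "distr (proposal \<Otimes>\<^sub>M samples J) (samples (insert 1 J)) (\<lambda>(x, z). z(1 := x))
      = samples (insert 1 J)"
    using distr_pair_PiM_eq_PiM[of J "\<lambda>_. proposal" 1] assms(1) prob_space_proposal by simp
  have gm: "g \<in> borel_measurable (samples (insert 1 J))" using g by simp
  have i2: "integrable (proposal \<Otimes>\<^sub>M samples J) (\<lambda>(x, z). g (z(1 := x)))"
    using integrable_distr_eq[OF m gm] d g by (simp add: case_prod_beta')
  show "integrable proposal (\<lambda>x. \<integral>z. g (z(1 := x)) \<partial>samples J)"
    using QJ.integrable_fst'[OF i2] by simp
  have "integral\<^sup>L (samples (insert 1 J)) g
      = (\<integral>y. g ((\<lambda>(x, z). z(1 := x)) y) \<partial>(proposal \<Otimes>\<^sub>M samples J))"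
    using integral_distr[OF m gm] d by simp
  also have "\<dots> = (\<integral>x. (\<integral>z. g (z(1 := x)) \<partial>samples J) \<partial>proposal)"
    using QJ.integral_fst'[OF i2] by (simp add: case_prod_beta')
  finally show "integral\<^sup>L (samples (insert 1 J)) g
      = (\<integral>x. (\<integral>z. g (z(1 := x)) \<partial>samples J) \<partial>proposal)" .
qed

end

locale multiple_proposal_fun = multiple_proposal +
  fixes f :: "'a \<Rightarrow> real"
  assumes f_measurable[measurable]: "f \<in> borel_measurable M"
    and f_square_integrable: "integrable target (\<lambda>x. (f x)\<^sup>2)"
begin

lemma integrable_w_f_sq: "integrable proposal (\<lambda>x. w x * (f x)\<^sup>2)"
  using f_square_integrable integrable_target[of "\<lambda>x. (f x)\<^sup>2"] by simp

lemma integrable_target_f: "integrable target f"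
proof -
  interpret prob_space target by (rule prob_space_target)
  show ?thesis by (rule square_integrable_imp_integrable[OF _ f_square_integrable]) simp
qed

lemma integrable_w_f: "integrable proposal (\<lambda>x. w x * f x)"
  using integrable_target_f integrable_target[of f] by simp

lemma integrable_w_abs_f: "integrable proposal (\<lambda>x. w x * \<bar>f x\<bar>)"
  using integrable_target_f integrable_target[of "\<lambda>x. \<bar>f x\<bar>"] by simp

definition sample_wvar :: "nat set \<Rightarrow> (nat \<Rightarrow> 'a) \<Rightarrow> real" where
  "sample_wvar S z = wvar (\<lambda>i. w (z i)) (\<lambda>i. f (z i)) S"

definition mean_wvar :: "nat \<Rightarrow> real" where
  "mean_wvar n = (\<integral>z. sample_wvar {1..n} z \<partial>samples {1..n})"

lemma weights_nonneg: "z \<in> space (samples I) \<Longrightarrow> i \<in> I \<Longrightarrow> w (z i) \<ge> 0"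
  by (rule w_nonneg[OF space_samples_component])

lemma integrable_sample_wvar:
  assumes "S \<subseteq> I" "finite S"
  shows "integrable (samples I) (sample_wvar S)"
proof (rule Bochner_Integration.integrable_bound)
  show "integrable (samples I) (\<lambda>z. \<Sum>i\<in>S. w (z i) * (f (z i))\<^sup>2)"
    using assms integrable_w_f_sq
    by (intro Bochner_Integration.integrable_sum integrable_component) auto
  have "(\<lambda>z. g (z i)) \<in> borel_measurable (samples I)"
    if "i \<in> S" "g \<in> borel_measurable M" for g :: "'a \<Rightarrow> real" and i
    using assms that by (intro measurable_component) auto
  note component = this[of _ "\<lambda>x. w x * (f x)\<^sup>2"] this[of _ "\<lambda>x. w x * f x"] this[of _ w]
  show "sample_wvar S \<in> borel_measurable (samples I)"
    unfolding sample_wvar_def[abs_def] wvar_def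
    by (intro borel_measurable_diff borel_measurable_divide borel_measurable_power
        borel_measurable_sum component) simp_all
  show "AE z in samples I. norm (sample_wvar S z) \<le> norm (\<Sum>i\<in>S. w (z i) * (f (z i))\<^sup>2)"
  proof (intro AE_I2)
    fix z assume z: "z \<in> space (samples I)"
    have nn: "\<And>i. i \<in> S \<Longrightarrow> w (z i) \<ge> 0" using weights_nonneg[OF z] assms(1) by auto
    have "(\<Sum>i\<in>S. w (z i) * f (z i))\<^sup>2 / (\<Sum>i\<in>S. w (z i)) \<ge> 0"
      using nn by (intro divide_nonneg_nonneg sum_nonneg) auto
    then show "norm (sample_wvar S z) \<le> norm (\<Sum>i\<in>S. w (z i) * (f (z i))\<^sup>2)"
      using wvar_nonneg[of S "\<lambda>i. w (z i)" "\<lambda>i. f (z i)"] nn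
      by (simp add: sample_wvar_def wvar_def)
  qed
qed

lemma integral_sample_wvar:
  assumes "finite I" "S \<subseteq> I"
  shows "(\<integral>z. sample_wvar S z \<partial>samples I) = mean_wvar (card S)"
proof -
  have finS: "finite S" using assms by (rule finite_subset[rotated])
  obtain t where t: "bij_betw t {1..card S} S"
    using finS ex_bij_betw_nat_finite_1 by blast
  have reindex: "(\<lambda>\<omega>. sample_wvar {1..card S} (\<lambda>n\<in>{1..card S}. \<omega> (t n))) = sample_wvar S"
  proof
    fix \<omega>
    have "sample_wvar {1..card S} (\<lambda>n\<in>{1..card S}. \<omega> (t n))
        = wvar (\<lambda>i. w (\<omega> (t i))) (\<lambda>i. f (\<omega> (t i))) {1..card S}"
      unfolding sample_wvar_def wvar_def
      by (intro arg_cong2[where f = "(-)"] arg_cong2[where f = "(/)"]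
          arg_cong2[where f = power] sum.cong refl) auto
    then show "sample_wvar {1..card S} (\<lambda>n\<in>{1..card S}. \<omega> (t n)) = sample_wvar S \<omega>"
      unfolding sample_wvar_def wvar_def
      using sum.reindex_bij_betw[OF t, of "\<lambda>i. w (\<omega> i) * (f (\<omega> i))\<^sup>2"]
        sum.reindex_bij_betw[OF t, of "\<lambda>i. w (\<omega> i) * f (\<omega> i)"]
        sum.reindex_bij_betw[OF t, of "\<lambda>i. w (\<omega> i)"]
      by simp
  qed
  have "(\<integral>\<omega>. sample_wvar {1..card S} (\<lambda>n\<in>{1..card S}. \<omega> (t n)) \<partial>samples I) = mean_wvar (card S)"
  proof -
    have inj: "inj_on t {1..card S}" using t by (rule bij_betw_imp_inj_on)
    have "t \<in> {1..card S} \<rightarrow> I" using bij_betwE[OF t] assms(2) by auto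
    then show ?thesis unfolding mean_wvar_def
      by (intro integral_reindex[OF inj] borel_measurable_integrable integrable_sample_wvar) auto
  qed
  then show ?thesis unfolding reindex .
qed

lemma integral_leave_one_out:
  assumes "finite S"
  shows "(\<integral>z. (\<Sum>k\<in>S. sample_wvar (S - {k}) z) \<partial>samples S) = real (card S) * mean_wvar (card S - 1)"
proof -
  have "(\<integral>z. (\<Sum>k\<in>S. sample_wvar (S - {k}) z) \<partial>samples S)
      = (\<Sum>k\<in>S. (\<integral>z. sample_wvar (S - {k}) z \<partial>samples S))"
    using assms by (intro Bochner_Integration.integral_sum integrable_sample_wvar) auto
  also have "\<dots> = (\<Sum>k\<in>S. mean_wvar (card S - 1))"
    using assms by (intro sum.cong refl) (simp add: integral_sample_wvar)
  finally show ?thesis by simp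
qed

lemma integral_leave_two_out:
  assumes "finite S"
  shows "(\<integral>z. (\<Sum>k\<in>S. \<Sum>l\<in>S-{k}. sample_wvar (S - {k} - {l}) z) \<partial>samples S)
       = real (card S) * real (card S - 1) * mean_wvar (card S - 2)"
proof -
  have "(\<integral>z. (\<Sum>k\<in>S. \<Sum>l\<in>S-{k}. sample_wvar (S - {k} - {l}) z) \<partial>samples S)
      = (\<Sum>k\<in>S. \<Sum>l\<in>S-{k}. (\<integral>z. sample_wvar (S - {k} - {l}) z \<partial>samples S))"
  proof -
    have "(\<integral>z. (\<Sum>k\<in>S. \<Sum>l\<in>S-{k}. sample_wvar (S - {k} - {l}) z) \<partial>samples S)
        = (\<Sum>k\<in>S. (\<integral>z. (\<Sum>l\<in>S-{k}. sample_wvar (S - {k} - {l}) z) \<partial>samples S))"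
      using assms by (intro Bochner_Integration.integral_sum Bochner_Integration.integrable_sum
          integrable_sample_wvar) auto
    also have "\<dots> = (\<Sum>k\<in>S. \<Sum>l\<in>S-{k}. (\<integral>z. sample_wvar (S - {k} - {l}) z \<partial>samples S))"
      using assms by (intro sum.cong refl Bochner_Integration.integral_sum
        integrable_sample_wvar) auto
    finally show ?thesis .
  qed
  also have "\<dots> = (\<Sum>k\<in>S. \<Sum>l\<in>S-{k}. mean_wvar (card S - 2))"
  proof (intro sum.cong refl)
    fix k l assume "k \<in> S" "l \<in> S - {k}"
    then have "card (S - {k} - {l}) = card S - 2" using assms by (simp add: card_Diff_singleton_if)
    then show "(\<integral>z. sample_wvar (S - {k} - {l}) z \<partial>samples S) = mean_wvar (card S - 2)"
      using integral_sample_wvar[OF assms, of "S - {k} - {l}"] by auto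
  qed
  finally show ?thesis using assms by (simp add: card_Diff_singleton_if)
qed

lemma mean_wvar_concave:
  "(real n + 1) * real n * mean_wvar (n + 2) + (real n + 2) * (real n + 1) * mean_wvar n
     \<le> 2 * real n * ((real n + 2) * mean_wvar (n + 1))"
proof -
  define S where "S = {1..n + 2}"
  have S: "finite S" "card S = n + 2" by (simp_all add: S_def)
  note integrable = integrable_sample_wvar[of _ S] S(1)
  have "(\<integral>z. (real n + 1) * real n * sample_wvar S z
           + (\<Sum>k\<in>S. \<Sum>l\<in>S-{k}. sample_wvar (S - {k} - {l}) z) \<partial>samples S)
      \<le> (\<integral>z. 2 * real n * (\<Sum>k\<in>S. sample_wvar (S - {k}) z) \<partial>samples S)"
  proof (rule integral_mono)
    fix z assume "z \<in> space (samples S)"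
    then have "\<And>i. i \<in> S \<Longrightarrow> w (z i) \<ge> 0" by (rule weights_nonneg)
    from wvar_leave_two_out[where a = "\<lambda>i. w (z i)" and b = "\<lambda>i. f (z i)", OF S(1) this]
    show "(real n + 1) * real n * sample_wvar S z + (\<Sum>k\<in>S. \<Sum>l\<in>S-{k}. sample_wvar (S - {k} - {l}) z)
        \<le> 2 * real n * (\<Sum>k\<in>S. sample_wvar (S - {k}) z)"
      by (simp add: sample_wvar_def S(2) algebra_simps)
  qed (use S(1) in \<open>auto intro!: integrable_sample_wvar Bochner_Integration.integrable_sum\<close>)
  moreover have "(\<integral>z. (real n + 1) * real n * sample_wvar S z
           + (\<Sum>k\<in>S. \<Sum>l\<in>S-{k}. sample_wvar (S - {k} - {l}) z) \<partial>samples S)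
      = (real n + 1) * real n * mean_wvar (n + 2) + (real n + 2) * (real n + 1) * mean_wvar n"
  proof -
    have "(\<integral>z. (\<Sum>k\<in>S. \<Sum>l\<in>S-{k}. sample_wvar (S - {k} - {l}) z) \<partial>samples S)
        = (real n + 2) * (real n + 1) * mean_wvar n"
      using integral_leave_two_out[OF S(1)] S(2) by (simp add: algebra_simps)
    moreover have "(\<integral>z. (real n + 1) * real n * sample_wvar S z \<partial>samples S)
        = (real n + 1) * real n * mean_wvar (n + 2)"
      using integral_sample_wvar[OF S(1) subset_refl] S(2) by simp
    ultimately show ?thesis using S(1)
      by (subst Bochner_Integration.integral_add)
        (auto intro!: integrable_sample_wvar Bochner_Integration.integrable_sum)
  qed
  moreover have "(\<integral>z. 2 * real n * (\<Sum>k\<in>S. sample_wvar (S - {k}) z) \<partial>samples S)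
      = 2 * real n * ((real n + 2) * mean_wvar (n + 1))"
  proof -
    have "(\<integral>z. (\<Sum>k\<in>S. sample_wvar (S - {k}) z) \<partial>samples S) = (real n + 2) * mean_wvar (n + 1)"
      using integral_leave_one_out[OF S(1)] S(2) by simp
    then show ?thesis by simp
  qed
  ultimately show ?thesis by linarith
qed

lemma integral_weighted_sq_diff:
  fixes S :: "nat set"
  assumes S: "finite S" "i \<in> S" "j \<in> S" "i \<noteq> j"
  shows "integrable (samples S) (\<lambda>z. w (z i) * w (z j) * (f (z i) - f (z j))\<^sup>2)"
    and "(\<integral>z. w (z i) * w (z j) * (f (z i) - f (z j))\<^sup>2 \<partial>samples S)
       = 2 * ((\<integral>x. (f x)\<^sup>2 \<partial>target) - (\<integral>x. f x \<partial>target)\<^sup>2)"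
proof -
  have expand: "w (z i) * w (z j) * (f (z i) - f (z j))\<^sup>2
      = w (z i) * (f (z i))\<^sup>2 * w (z j) + w (z i) * (w (z j) * (f (z j))\<^sup>2)
        - 2 * ((w (z i) * f (z i)) * (w (z j) * f (z j)))" for z
    by (simp add: power2_eq_square algebra_simps)
  note p1 = integral_two_components[OF S integrable_w_f_sq integrable_w]
    and p2 = integral_two_components[OF S integrable_w integrable_w_f_sq]
    and p3 = integral_two_components[OF S integrable_w_f integrable_w_f]
  show "integrable (samples S) (\<lambda>z. w (z i) * w (z j) * (f (z i) - f (z j))\<^sup>2)"
    unfolding expand using p1(1) p2(1) p3(1) by auto
  have "(\<integral>z. w (z i) * w (z j) * (f (z i) - f (z j))\<^sup>2 \<partial>samples S)
      = 2 * (\<integral>x. w x * (f x)\<^sup>2 \<partial>proposal) * (\<integral>x. w x \<partial>proposal)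
        - 2 * (\<integral>x. w x * f x \<partial>proposal)\<^sup>2"
    unfolding expand using p1 p2 p3 by (simp add: power2_eq_square)
  then show "(\<integral>z. w (z i) * w (z j) * (f (z i) - f (z j))\<^sup>2 \<partial>samples S)
      = 2 * ((\<integral>x. (f x)\<^sup>2 \<partial>target) - (\<integral>x. f x \<partial>target)\<^sup>2)"
    by (simp add: integral_target integral_w algebra_simps)
qed

lemma mean_wvar_strict:
  assumes "(\<integral>x. f x \<partial>target) = 0" "(\<integral>x. (f x)\<^sup>2 \<partial>target) > 0" and n: "n \<ge> 1"
  shows "real (n + 1) * mean_wvar n < real n * mean_wvar (n + 1)"
proof -
  define S where "S = {1..n + 1}"
  have S: "finite S" "card S = n + 1" "1 \<in> S" "2 \<in> S" using n by (auto simp: S_def)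
  define G where "G z = real n * sample_wvar S z - (\<Sum>k\<in>S. sample_wvar (S - {k}) z)" for z
  have G_integrable: "integrable (samples S) G"
    unfolding G_def[abs_def] using S(1)
    by (intro Bochner_Integration.integrable_diff integrable_mult_right
        Bochner_Integration.integrable_sum integrable_sample_wvar) auto
  have G_integral:
    "integral\<^sup>L (samples S) G = real n * mean_wvar (n + 1) - real (n + 1) * mean_wvar n"
    unfolding G_def
    using S integral_leave_one_out[OF S(1)] integral_sample_wvar[OF S(1) subset_refl]
    by (subst Bochner_Integration.integral_diff)
      (auto intro!: integrable_sample_wvar Bochner_Integration.integrable_sum)
  have G_nonneg: "G z \<ge> 0" if "z \<in> space (samples S)" for z
    using wvar_leave_one_out_le[where a = "\<lambda>i. w (z i)" and b = "\<lambda>i. f (z i)", OF S(1)]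
      weights_nonneg[OF that] by (simp add: G_def sample_wvar_def S(2))
  have "integral\<^sup>L (samples S) G \<noteq> 0"
  proof
    assume "integral\<^sup>L (samples S) G = 0"
    with G_nonneg have "AE z in samples S. G z = 0"
      using integral_nonneg_eq_0_iff_AE[OF G_integrable] by (simp add: AE_I2)
    then have "AE z in samples S. w (z 1) * w (z 2) * (f (z 1) - f (z 2))\<^sup>2 = 0"
    proof (rule AE_mp, intro AE_I2 impI)
      fix z assume "z \<in> space (samples S)" "G z = 0"
      then show "w (z 1) * w (z 2) * (f (z 1) - f (z 2))\<^sup>2 = 0"
        using wvar_leave_one_out_less[where a = "\<lambda>i. w (z i)" and b = "\<lambda>i. f (z i)",
            OF S(1) _ S(3,4)]
          weights_nonneg[of z S] by (force simp: G_def sample_wvar_def S(2))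
    qed
    then have "(\<integral>z. w (z 1) * w (z 2) * (f (z 1) - f (z 2))\<^sup>2 \<partial>samples S) = 0"
      by (rule integral_eq_zero_AE)
    then show False using integral_weighted_sq_diff(2)[OF S(1,3,4)] assms(1,2) by simp
  qed
  moreover have "integral\<^sup>L (samples S) G \<ge> 0"
    by (rule Bochner_Integration.integral_nonneg[OF G_nonneg])
  ultimately show ?thesis using G_integral by linarith
qed

definition self_normalised_mean :: "nat \<Rightarrow> (nat \<Rightarrow> 'a) \<Rightarrow> real" where
  "self_normalised_mean N z = wmean (\<lambda>i. w (z i)) (\<lambda>i. f (z i)) {1..N}"

definition weighted_dev :: "nat \<Rightarrow> nat \<Rightarrow> (nat \<Rightarrow> 'a) \<Rightarrow> real" where
  "weighted_dev N k z = w (z k) * (f (z k) * (f (z k) - self_normalised_mean N z))"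

lemma PN_eq: "N \<ge> 2 \<Longrightarrow> PN M p q N f x = (\<integral>z. self_normalised_mean N (z(1 := x)) \<partial>samples {2..N})"
  by (simp add: PN_def self_normalised_mean_def wmean_def Let_def)

lemma measurable_component_w_f:
  assumes "i \<in> I"
  shows "(\<lambda>z. w (z i)) \<in> borel_measurable (samples I)"
    and "(\<lambda>z. f (z i)) \<in> borel_measurable (samples I)"
  using assms by (simp_all add: measurable_component)

lemma measurable_weighted_dev:
  "self_normalised_mean N \<in> borel_measurable (samples {1..N})"
  "k \<in> {1..N} \<Longrightarrow> weighted_dev N k \<in> borel_measurable (samples {1..N})"
proof -
  show mean: "self_normalised_mean N \<in> borel_measurable (samples {1..N})"
    unfolding self_normalised_mean_def[abs_def] wmean_def
    by (intro borel_measurable_sum borel_measurable_times borel_measurable_divide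
      measurable_component_w_f)
  show "k \<in> {1..N} \<Longrightarrow> weighted_dev N k \<in> borel_measurable (samples {1..N})"
    unfolding weighted_dev_def[abs_def]
    by (intro borel_measurable_times borel_measurable_diff measurable_component_w_f mean)
qed

lemma integrable_weighted_dev:
  assumes "k \<in> {1..N}"
  shows "integrable (samples {1..N}) (weighted_dev N k)"
proof (rule Bochner_Integration.integrable_bound)
  show "integrable (samples {1..N}) (\<lambda>z. 2 * (\<Sum>i = 1..N. w (z i) * (f (z i))\<^sup>2))"
    using integrable_w_f_sq
    by (intro integrable_mult_right Bochner_Integration.integrable_sum integrable_component) auto
  show "weighted_dev N k \<in> borel_measurable (samples {1..N})"
    using assms by (rule measurable_weighted_dev)
  show "AE z in samples {1..N}.
      norm (weighted_dev N k z) \<le> norm (2 * (\<Sum>i = 1..N. w (z i) * (f (z i))\<^sup>2))"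
  proof (intro AE_I2)
    fix z assume z: "z \<in> space (samples {1..N})"
    have nn: "\<And>i. i \<in> {1..N} \<Longrightarrow> w (z i) \<ge> 0" using weights_nonneg[OF z] .
    have "\<bar>weighted_dev N k z\<bar> \<le> 2 * (\<Sum>i = 1..N. w (z i) * (f (z i))\<^sup>2)"
      using abs_weighted_dev_le[where a = "\<lambda>i. w (z i)" and b = "\<lambda>i. f (z i)", OF _ nn assms]
      by (simp add: weighted_dev_def self_normalised_mean_def)
    moreover have "(\<Sum>i = 1..N. w (z i) * (f (z i))\<^sup>2) \<ge> 0" using nn by (intro sum_nonneg) auto
    ultimately show "norm (weighted_dev N k z) \<le> norm (2 * (\<Sum>i = 1..N. w (z i) * (f (z i))\<^sup>2))"
      by simp
  qed
qed

lemma integral_weighted_dev_swap: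
  assumes k: "k \<in> {1..N}"
  shows "(\<integral>z. weighted_dev N k z \<partial>samples {1..N}) = (\<integral>z. weighted_dev N 1 z \<partial>samples {1..N})"
proof -
  define t where "t n = (if n = 1 then k else if n = k then 1 else n)" for n :: nat
  have t: "bij_betw t {1..N} {1..N}"
    unfolding t_def using k by (intro bij_betwI[where g = t]) (auto simp: t_def)
  have N1: "1 \<in> {1..N}" using k by simp
  have "self_normalised_mean N (\<lambda>n\<in>{1..N}. \<omega> (t n)) = self_normalised_mean N \<omega>" for \<omega>
  proof -
    have "(\<Sum>j = 1..N. w (\<omega> (t j))) = (\<Sum>j = 1..N. w (\<omega> j))" by (rule sum.reindex_bij_betw[OF t])
    moreover have "(\<Sum>i = 1..N. w (\<omega> (t i)) / W * f (\<omega> (t i))) = (\<Sum>i = 1..N. w (\<omega> i) / W * f (\<omega> i))"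
      for W by (rule sum.reindex_bij_betw[OF t])
    ultimately show ?thesis by (simp add: self_normalised_mean_def wmean_def)
  qed
  then have "weighted_dev N 1 (\<lambda>n\<in>{1..N}. \<omega> (t n)) = weighted_dev N k \<omega>" for \<omega>
    using N1 by (simp add: weighted_dev_def t_def)
  moreover have "(\<integral>\<omega>. weighted_dev N 1 (\<lambda>n\<in>{1..N}. \<omega> (t n)) \<partial>samples {1..N})
      = (\<integral>z. weighted_dev N 1 z \<partial>samples {1..N})"
    using t N1 by (intro integral_reindex measurable_weighted_dev) (auto simp: bij_betw_def)
  ultimately show ?thesis by simp
qed

lemma mean_wvar_eq_integral_weighted_dev:
  "mean_wvar N = real N * (\<integral>z. weighted_dev N 1 z \<partial>samples {1..N})"
proof -
  have "mean_wvar N = (\<integral>z. (\<Sum>k = 1..N. weighted_dev N k z) \<partial>samples {1..N})"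
    unfolding mean_wvar_def sample_wvar_def weighted_dev_def self_normalised_mean_def
    by (simp only: wvar_eq_sum_dev)
  also have "\<dots> = (\<Sum>k = 1..N. (\<integral>z. weighted_dev N k z \<partial>samples {1..N}))"
    by (intro Bochner_Integration.integral_sum integrable_weighted_dev)
  also have "\<dots> = (\<Sum>k = 1..N. (\<integral>z. weighted_dev N 1 z \<partial>samples {1..N}))"
    by (intro sum.cong refl integral_weighted_dev_swap)
  finally show ?thesis by simp
qed

lemma PN_measurable:
  assumes "N \<ge> 2"
  shows "PN M p q N f \<in> borel_measurable M"
proof -
  interpret J: prob_space "samples {2..N}" by (rule prob_space_samples)
  have "insert 1 {2..N} = {1..N}" using assms by auto
  then have "(\<lambda>(x, z). z(1 := x)) \<in> measurable (M \<Otimes>\<^sub>M samples {2..N}) (samples {1..N})"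
    using measurable_update_first[OF refl, of "{2..N}"] by simp
  from measurable_compose[OF this measurable_weighted_dev(1)[of N]]
  have "(\<lambda>(x, z). self_normalised_mean N (z(1 := x))) \<in> borel_measurable (M \<Otimes>\<^sub>M samples {2..N})"
    by (simp add: case_prod_beta')
  then have "(\<lambda>x. \<integral>z. self_normalised_mean N (z(1 := x)) \<partial>samples {2..N}) \<in> borel_measurable M"
    by (intro J.borel_measurable_lebesgue_integral) (simp add: case_prod_beta')
  moreover have "PN M p q N f = (\<lambda>x. \<integral>z. self_normalised_mean N (z(1 := x)) \<partial>samples {2..N})"
    by (intro ext PN_eq[OF assms])
  ultimately show ?thesis by simp
qed

lemma integrable_self_normalised_mean_update:
  assumes N: "N \<ge> 2" and x: "x \<in> space M" "w x > 0"
  shows "integrable (samples {2..N}) (\<lambda>z. self_normalised_mean N (z(1 := x)))"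
proof (rule Bochner_Integration.integrable_bound)
  interpret J: prob_space "samples {2..N}" by (rule prob_space_samples)
  define B where "B z = (\<Sum>i = 1..N. w ((z(1 := x)) i) * \<bar>f ((z(1 := x)) i)\<bar>) / w x" for z
  have "integrable (samples {2..N}) (\<lambda>z. w ((z(1 := x)) i) * \<bar>f ((z(1 := x)) i)\<bar>)"
    if "i \<in> {1..N}" for i
  proof (cases "i = 1")
    case False
    then have "i \<in> {2..N}" using that by auto
    from integrable_component[OF this integrable_w_abs_f] False show ?thesis by simp
  qed simp
  then show "integrable (samples {2..N}) B"
    unfolding B_def[abs_def] by (intro integrable_divide Bochner_Integration.integrable_sum)
  have "(\<lambda>z. z(1 := x)) \<in> measurable (samples {2..N}) (samples ({2..N} \<union> {1}))"
    by (rule measurable_fun_upd[where J = "{2..N}"]) (use x in auto)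
  moreover have "{2..N} \<union> {1} = {1..N}" using N by auto
  ultimately have "(\<lambda>z. z(1 := x)) \<in> measurable (samples {2..N}) (samples {1..N})" by simp
  from measurable_compose[OF this measurable_weighted_dev(1)]
  show "(\<lambda>z. self_normalised_mean N (z(1 := x))) \<in> borel_measurable (samples {2..N})" .
  show "AE z in samples {2..N}. norm (self_normalised_mean N (z(1 := x))) \<le> norm (B z)"
  proof (intro AE_I2)
    fix z assume z: "z \<in> space (samples {2..N})"
    have nn: "\<And>i. i \<in> {1..N} \<Longrightarrow> w ((z(1 := x)) i) \<ge> 0"
      using x z weights_nonneg[of z "{2..N}"] w_nonneg by (auto simp: fun_upd_def)
    have "\<bar>wmean (\<lambda>i. w ((z(1 := x)) i)) (\<lambda>i. f ((z(1 := x)) i)) {1..N}\<bar>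
        \<le> (\<Sum>i = 1..N. w ((z(1 := x)) i) * \<bar>f ((z(1 := x)) i)\<bar>) / w ((z(1 := x)) 1)"
      using x N by (intro abs_wmean_le[OF _ nn]) auto
    then have "\<bar>self_normalised_mean N (z(1 := x))\<bar> \<le> B z"
      by (simp only: self_normalised_mean_def B_def fun_upd_same)
    then show "norm (self_normalised_mean N (z(1 := x))) \<le> norm (B z)" by simp
  qed
qed

lemma weighted_dev_update_integral:
  assumes N: "N \<ge> 2" and x: "x \<in> space M"
  shows "w x * (f x * (f x - PN M p q N f x)) = (\<integral>z. weighted_dev N 1 (z(1 := x)) \<partial>samples {2..N})"
proof (cases "w x = 0")
  case False
  then have "w x > 0" using w_nonneg[OF x] by simp
  interpret J: prob_space "samples {2..N}" by (rule prob_space_samples)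
  have "(\<integral>z. weighted_dev N 1 (z(1 := x)) \<partial>samples {2..N})
      = w x * (f x * (\<integral>z. f x - self_normalised_mean N (z(1 := x)) \<partial>samples {2..N}))"
    by (simp add: weighted_dev_def)
  also have "(\<integral>z. f x - self_normalised_mean N (z(1 := x)) \<partial>samples {2..N})
      = f x - (\<integral>z. self_normalised_mean N (z(1 := x)) \<partial>samples {2..N})"
    using integrable_self_normalised_mean_update[OF N x \<open>w x > 0\<close>]
    by (simp add: Bochner_Integration.integral_diff J.prob_space)
  finally show ?thesis unfolding PN_eq[OF N] by (rule sym)
qed (simp add: weighted_dev_def)

lemma mean_wvar_one: "mean_wvar 1 = 0"
proof -
  have "wvar a b {k} = 0" for a b :: "nat \<Rightarrow> real" and k
    by (cases "a k = 0") (simp_all add: wvar_def power2_eq_square)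
  then show ?thesis by (simp add: mean_wvar_def sample_wvar_def)
qed

lemma integral_weighted_dev_PN:
  assumes N: "N \<ge> 2"
  shows "integrable proposal (\<lambda>x. w x * (f x * (f x - PN M p q N f x)))"
    and "(\<integral>x. w x * (f x * (f x - PN M p q N f x)) \<partial>proposal)
       = (\<integral>z. weighted_dev N 1 z \<partial>samples {1..N})"
proof -
  have "insert 1 {2..N} = {1..N}" using N by auto
  note split = integral_split_first[of "{2..N}" "weighted_dev N 1", unfolded this,
      OF _ integrable_weighted_dev[of 1 N]]
  have eq: "\<And>x. x \<in> space proposal \<Longrightarrow> w x * (f x * (f x - PN M p q N f x))
      = (\<integral>z. weighted_dev N 1 (z(1 := x)) \<partial>samples {2..N})"
    using weighted_dev_update_integral[OF N] by simp
  show "integrable proposal (\<lambda>x. w x * (f x * (f x - PN M p q N f x)))"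
    using split(1) N by (subst Bochner_Integration.integrable_cong[OF refl eq]) auto
  have "(\<integral>x. w x * (f x * (f x - PN M p q N f x)) \<partial>proposal)
      = (\<integral>x. (\<integral>z. weighted_dev N 1 (z(1 := x)) \<partial>samples {2..N}) \<partial>proposal)"
    by (rule Bochner_Integration.integral_cong[OF refl eq])
  also have "\<dots> = (\<integral>z. weighted_dev N 1 z \<partial>samples {1..N})"
    using split(2) N by simp
  finally show "(\<integral>x. w x * (f x * (f x - PN M p q N f x)) \<partial>proposal)
      = (\<integral>z. weighted_dev N 1 z \<partial>samples {1..N})" .
qed

(* For N <= 1 both sides vanish: P_N is the identity, mean_wvar 1 = 0 and x / 0 = 0. *)

lemma dirichlet_PN:
  shows "integrable target (\<lambda>x. f x * (f x - PN M p q N f x))"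
    and "(\<integral>x. f x * (f x - PN M p q N f x) \<partial>target) = mean_wvar N / real N"
proof -
  have "integrable target (\<lambda>x. f x * (f x - PN M p q N f x))
      \<and> (\<integral>x. f x * (f x - PN M p q N f x) \<partial>target) = mean_wvar N / real N"
  proof (cases "N \<ge> 2")
    case False
    then have "N = 0 \<or> N = 1" by auto
    moreover have "PN M p q N f = f" using False by (simp add: PN_def fun_eq_iff)
    ultimately show ?thesis using mean_wvar_one by auto
  next
    case True
    have "(\<lambda>x. f x * (f x - PN M p q N f x)) \<in> borel_measurable M"
      using PN_measurable[OF True] by measurable
    then show ?thesis
      using integrable_target integral_target integral_weighted_dev_PN[OF True]
        mean_wvar_eq_integral_weighted_dev[of N] True
      by simp
  qed
  then show "integrable target (\<lambda>x. f x * (f x - PN M p q N f x))"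
    and "(\<integral>x. f x * (f x - PN M p q N f x) \<partial>target) = mean_wvar N / real N" by auto
qed

definition dirichlet_seq :: "nat \<Rightarrow> real" where
  "dirichlet_seq n = mean_wvar n / real n"

lemma Dir_eq_lin_interp: "Dir M p q lam f = lin_interp dirichlet_seq lam"
proof -
  define n \<beta> where "n = nat \<lfloor>lam\<rfloor>" and "\<beta> = real n + 1 - lam"
  have "f x * (f x - Plam M p q lam f x)
      = \<beta> * (f x * (f x - PN M p q n f x)) + (1 - \<beta>) * (f x * (f x - PN M p q (n + 1) f x))" for x
    by (simp add: Plam_def Let_def n_def \<beta>_def algebra_simps)
  then have "Dir M p q lam f = \<beta> * dirichlet_seq n + (1 - \<beta>) * dirichlet_seq (n + 1)"
    using dirichlet_PN[of n] dirichlet_PN[of "n + 1"] by (simp add: Dir_def dirichlet_seq_def)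
  then show ?thesis by (simp add: lin_interp_def n_def[symmetric] \<beta>_def algebra_simps)
qed

lemma dirichlet_seq_one: "dirichlet_seq 1 = 0"
  unfolding dirichlet_seq_def mean_wvar_one by simp

lemma dirichlet_seq_concave:
  assumes "n \<ge> 1"
  shows "dirichlet_seq (n + 2) - dirichlet_seq (n + 1) \<le> dirichlet_seq (n + 1) - dirichlet_seq n"
proof -
  have ratio: "z / c + x / a \<le> 2 * (y / b)"
    if "a > 0" "b > 0" "c > 0" "b * a * z + c * b * x \<le> 2 * a * (c * y)" for a b c x y z :: real
  proof -
    have "z / c + x / a - 2 * (y / b) = (b * a * z + c * b * x - 2 * a * (c * y)) / (a * b * c)"
      using that by (simp add: field_simps)
    also have "\<dots> \<le> 0" using that by (intro divide_nonpos_pos) auto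
    finally show ?thesis by simp
  qed
  have "mean_wvar (n + 2) / (real n + 2) + mean_wvar n / real n
      \<le> 2 * (mean_wvar (n + 1) / (real n + 1))"
    using assms mean_wvar_concave[of n] by (intro ratio) auto
  then show ?thesis by (simp add: dirichlet_seq_def add.commute)
qed

lemma dirichlet_seq_strict_mono:
  assumes "(\<integral>x. f x \<partial>target) = 0" "(\<integral>x. (f x)\<^sup>2 \<partial>target) > 0" "n \<ge> 1"
  shows "dirichlet_seq n < dirichlet_seq (Suc n)"
  using mean_wvar_strict[OF assms] assms(3) by (simp add: dirichlet_seq_def field_simps)

end

theorem proposition7p3:
  fixes M :: "'a measure" and p q f :: "'a \<Rightarrow> real"
  assumes "sigma_finite_measure M"
    and "p \<in> borel_measurable M" and "\<And>x. x \<in> space M \<Longrightarrow> p x \<ge> 0"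
    and "(\<integral>\<^sup>+ x. ennreal (p x) \<partial>M) = 1"
    and "q \<in> borel_measurable M" and "\<And>x. x \<in> space M \<Longrightarrow> q x \<ge> 0"
    and "(\<integral>\<^sup>+ x. ennreal (q x) \<partial>M) = 1"
    and "\<And>x. x \<in> space M \<Longrightarrow> p x > 0 \<Longrightarrow> q x > 0"
    and "f \<in> borel_measurable M"
    and "integrable (density M p) (\<lambda>x. (f x)\<^sup>2)"
    and "(\<integral>x. f x \<partial>(density M p)) = 0"
    and "(\<integral>x. (f x)\<^sup>2 \<partial>(density M p)) > 0"
  shows "(\<forall>lam\<ge>1. Dir M p q lam f \<ge> 0)
     \<and> continuous_on {1..} (\<lambda>lam. Dir M p q lam f)
     \<and> concave_on {1..} (\<lambda>lam. Dir M p q lam f)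
     \<and> strict_mono_on {1..} (\<lambda>lam. Dir M p q lam f)"
proof -
  interpret multiple_proposal_fun M p q f
    using assms(2-10) by unfold_locales
  have inc: "\<And>n. n \<ge> 1 \<Longrightarrow> dirichlet_seq n < dirichlet_seq (Suc n)"
    using dirichlet_seq_strict_mono assms(11,12) by blast
  have conc: "\<And>n. n \<ge> 1 \<Longrightarrow>
      dirichlet_seq (n + 2) - dirichlet_seq (n + 1) \<le> dirichlet_seq (n + 1) - dirichlet_seq n"
    by (rule dirichlet_seq_concave)
  show ?thesis
    unfolding Dir_eq_lin_interp
    using lin_interp_nonneg[where D = dirichlet_seq, OF _ inc] dirichlet_seq_one
      continuous_on_lin_interp
      concave_on_lin_interp[where D = dirichlet_seq, OF conc]
      strict_mono_on_lin_interp[where D = dirichlet_seq, OF inc]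
    by simp
qed

end
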